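(* Fix $\alpha>0$. Consider the model, estimator and conditions in the context. Assume (A0)–(A6) and $\mathbf A_0(\Theta)$ hold, the moment condition (M) holds with some $\epsilon>2$, and there is $\gamma>1$ with $\alpha_k^{(0)}=\mathcal O(k^{-\gamma})$ and $\sum_{k\ge1}k^{-\gamma}\max(\bar\varphi_k,\bar\psi_k)<\infty$. Then $\big\|\widehat H_{\alpha,n}(\theta)-H_{\alpha,n}(\theta)\big\|_\Theta\to0$ almost surely as $n\to\infty$.
   Context: Model. Let $\{Y_t,t\in\mathbb Z\}$ be an $\mathbb N_0$-valued time series and $X_t\in\mathbb R^{d_x}$ covariates, $\mathcal F_{t-1}=\sigma\{Y_{t-1},\dots;X_{t-1},\dots\}$. For $\theta$ in a compact $\Theta\subset\mathbb R^d$, $\lambda_t(\theta)=f_\theta(Y_{t-1},Y_{t-2},\dots;X_{t-1},X_{t-2},\dots)$ with $f_\theta$ a known (up to $\theta$) measurable non-negative function on $\mathbb N_0^{\mathbb N}\times(\mathbb R^{d_x})^{\mathbb N}$. Conditionally on $\mathcal F_{t-1}$, $Y_t$ has pmf $g(\cdot\mid\eta_t)$ on $\mathbb N_0$ with $\eta_t=\eta(\lambda_t(\theta^* ))$, $\theta^*\in\Theta$ the true parameter, $\mathbb E(Y_t\mid\mathcal F_{t-1})=\lambda_t(\theta^* )$; $\eta_t(\theta)=\eta(\lambda_t(\theta))$. The $Y_t$ are identically distributed and the support of $g(\cdot\mid\eta_t(\theta))$ does not depend on $\theta$. There is a stationary ergodic solution $(Y_t,\lambda_t,X_t)$. Norms: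 $\|x\|=\sup_i|x_i|$; $\|f\|_\Theta=\sup_{\theta\in\Theta}\|f(\theta)\|$; $\|Z\|_r=(\mathbb E\|Z\|^r)^{1/r}$. Moment condition (M) with $\epsilon$: $\exists C>0$, $\mathbb E\|(Y_t,\lambda_t,X_t)\|^{1+\epsilon}<C$ for all $t$. Estimator: $\widehat\lambda_t(\theta)=f_\theta(Y_{t-1},\dots,Y_1,0,\dots;X_{t-1},\dots,X_1,0,\dots)$, $\widehat\eta_t(\theta)=\eta(\widehat\lambda_t(\theta))$; $\ell_{\alpha,t}(\theta)=\sum_{y\ge0}g(y\mid\eta_t(\theta))^{1+\alpha}-(1+\frac1\alpha)g(Y_t\mid\eta_t(\theta))^\alpha$, $\widehat\ell_{\alpha,t}$ likewise with $\widehat\eta_t(\theta)$; $H_{\alpha,n}=\frac1n\sum_{t=1}^n\ell_{\alpha,t}$, $\widehat H_{\alpha,n}=\frac1n\sum_{t=1}^n\widehat\ell_{\alpha,t}$. $\mathbf A_0(\Theta)$: $\theta\mapsto f_\theta(y,x)$ continuous, $\|f_\theta(0)\|_\Theta<\infty$, and there are non-negative $\alpha_k^{(0)}$, $\sum_k\alpha_k^{(0)}<1$, with $\|f_\theta(y,x)-f_\theta(y',x')\|_\Theta\le\sum_{k\ge1}\alpha_k^{(0)}(|y_k-y'_k|+\|x_k-x'_k\|)$. (A0): $f_\theta(Y_{t-1},\dots;X_{t-1},\dots)=f_{\theta'}(Y_{t-1},\dots;X_{t-1},\dots)$ a.s. for some $t$ implies $\theta=\theta'$; $\exists\underline c>0$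 with $\inf_\theta f_\theta(y,x)\ge\underline c$ for all $(y,x)$. (A1): $\theta^*$ is interior to $\Theta$. (A2): $\mathbb E\|\lambda_t(\theta)\|_\Theta^4=\underline\lambda<\infty$ for all $t\ge1$. (A3): $\eta\mapsto g(y\mid\eta)$ is $C^2$ on $\mathbb R$ for each $y$, and $g(\cdot\mid\eta)=g(\cdot\mid\eta')$ implies $\eta=\eta'$. (A4): $\varphi(\eta)=\sum_{y\ge0}|\partial g(y\mid\eta)/\partial\eta|$ is well defined on $\mathbb R$ and for all $t\ge1$ there is $\bar\varphi_t>0$ with $\sup_{0\le\delta\le1}\|\,\|\varphi(\delta\eta_t(\theta)+(1-\delta)\widehat\eta_t(\theta))\|_\Theta\|_2\le\bar\varphi_t<\infty$. (A5): $\psi(\eta)=|g(Y_t\mid\eta)^{-1}\partial g(Y_t\mid\eta)/\partial\eta|$ is well defined on $\mathbb R$ and for all $t\ge1$ there is $\bar\psi_t>0$ with $\sup_{0\le\delta\le1}\|\,\|\psi(\delta\eta_t(\theta)+(1-\delta)\widehat\eta_t(\theta))\|_\Theta\|_2\le\bar\psi_t<\infty$. (A6): $\eta$ on $[\underline c,\infty)$ is Lipschitz with some constant $c_\eta>0$ and injective. *)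

theory Defs
  imports "HOL-Probability.Probability" "HOL-Library.Landau_Symbols"
begin

definition supn :: "real ^ 'e \<Rightarrow> real" where
  "supn x = Max (range (\<lambda>i. \<bar>x $ i\<bar>))"

definition past_sigma :: "'w measure \<Rightarrow> (int \<Rightarrow> 'w \<Rightarrow> nat) \<Rightarrow> (int \<Rightarrow> 'w \<Rightarrow> real ^ 'e) \<Rightarrow> int \<Rightarrow> 'w measure" where
  "past_sigma M Y X s = sigma (space M)
     (\<Union>u\<in>{..s}. {Y u -` A \<inter> space M | A. True} \<union> {X u -` B \<inter> space M | B. B \<in> sets borel})"

definition stationary_ergodic :: "'w measure \<Rightarrow> 'b measure \<Rightarrow> (int \<Rightarrow> 'w \<Rightarrow> 'b) \<Rightarrow> bool" where
  "stationary_ergodic M N Z \<longleftrightarrow>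
     (\<lambda>w t. Z t w) \<in> M \<rightarrow>\<^sub>M PiM UNIV (\<lambda>_. N) \<and>
     distr M (PiM UNIV (\<lambda>_. N)) (\<lambda>w t. Z (t + 1) w) = distr M (PiM UNIV (\<lambda>_. N)) (\<lambda>w t. Z t w) \<and>
     (\<forall>A \<in> sets (PiM UNIV (\<lambda>_. N)).
        (\<lambda>z t. z (t + 1)) -` A \<inter> space (PiM UNIV (\<lambda>_. N)) = A \<longrightarrow>
        measure M {w \<in> space M. (\<lambda>t. Z t w) \<in> A} \<in> {0, 1})"

text \<open>lambda_t(theta) = f_theta(Y_{t-1},Y_{t-2},...; X_{t-1},...). Sequence entry k is lag k+1.\<close>
definition lam :: "('th \<Rightarrow> (nat \<Rightarrow> nat) \<Rightarrow> (nat \<Rightarrow> real ^ 'e) \<Rightarrow> real) \<Rightarrow> (int \<Rightarrow> 'w \<Rightarrow> nat)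
      \<Rightarrow> (int \<Rightarrow> 'w \<Rightarrow> real ^ 'e) \<Rightarrow> int \<Rightarrow> 'th \<Rightarrow> 'w \<Rightarrow> real" where
  "lam f Y X t th w = f th (\<lambda>k. Y (t - 1 - int k) w) (\<lambda>k. X (t - 1 - int k) w)"

definition lamhat :: "('th \<Rightarrow> (nat \<Rightarrow> nat) \<Rightarrow> (nat \<Rightarrow> real ^ 'e) \<Rightarrow> real) \<Rightarrow> (int \<Rightarrow> 'w \<Rightarrow> nat)
      \<Rightarrow> (int \<Rightarrow> 'w \<Rightarrow> real ^ 'e) \<Rightarrow> int \<Rightarrow> 'th \<Rightarrow> 'w \<Rightarrow> real" where
  "lamhat f Y X t th w = f th (\<lambda>k. if int k < t - 1 then Y (t - 1 - int k) w else 0)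
                               (\<lambda>k. if int k < t - 1 then X (t - 1 - int k) w else 0)"

definition dpd :: "(nat \<Rightarrow> real \<Rightarrow> real) \<Rightarrow> real \<Rightarrow> nat \<Rightarrow> real \<Rightarrow> real" where
  "dpd g a y0 e = (\<Sum>y. g y e powr (1 + a)) - (1 + 1 / a) * g y0 e powr a"

definition Hn :: "(nat \<Rightarrow> real \<Rightarrow> real) \<Rightarrow> real \<Rightarrow> (int \<Rightarrow> 'w \<Rightarrow> nat) \<Rightarrow> (int \<Rightarrow> 'th \<Rightarrow> 'w \<Rightarrow> real)
      \<Rightarrow> nat \<Rightarrow> 'th \<Rightarrow> 'w \<Rightarrow> real" where
  "Hn g a Y eta_t n th w = (\<Sum>t = 1..n. dpd g a (Y (int t) w) (eta_t (int t) th w)) / real n"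

definition phi_fun :: "(nat \<Rightarrow> real \<Rightarrow> real) \<Rightarrow> real \<Rightarrow> real" where
  "phi_fun g e = (\<Sum>y. \<bar>deriv (g y) e\<bar>)"

definition psi_fun :: "(nat \<Rightarrow> real \<Rightarrow> real) \<Rightarrow> nat \<Rightarrow> real \<Rightarrow> real" where
  "psi_fun g y0 e = \<bar>inverse (g y0 e) * deriv (g y0) e\<bar>"

end

theory Submission
  imports Defs
begin

(* By the Lipschitz condition on f, |lamhat_t(theta) - lam_t(theta)| is bounded uniformly in theta by
   Z_t = sum_{k >= t-1} alpha_k (Y_{t-1-k} + |X_{t-1-k}|), and (A6) transfers this to eta.
   Integrating the derivative of the density power divergence along the segment between
   etahat_t(theta) and eta_t(theta) -- through phi for the sum of g^(1+alpha) and through the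
   logarithmic derivative psi for g(Y_t)^alpha -- gives |lhat_t(theta) - l_t(theta)| <= B_t with
   B_t = c Z_t int_0^1 (sup_theta phi + sup_theta psi) along the segment.  AM-GM against the second
   moments from (M), (A4), (A5) and the tail bound sum_{k >= t} alpha_k = O(t^(1-gamma)) give
   E B_t = O(t^(1-gamma) max(phibar_t, psibar_t)), so sum_t B_t / t is integrable, hence finite a.s.,
   and Kronecker's lemma yields n^(-1) sum_{t <= n} B_t -> 0 a.s., which dominates
   sup_theta |Hhat_n - H_n|.  The suprema over theta are measurable because the integrands are
   suprema of functions continuous in theta, hence determined on a countable dense subset. *)

lemma abs_diff_le_nn_integral_deriv_segment:
  fixes h h' :: "real \<Rightarrow> real"
  assumes hd: "\<And>e. (h has_real_derivative h' e) (at e)" and hc: "continuous_on UNIV h'"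
  shows "ennreal \<bar>h v - h u\<bar> \<le> ennreal \<bar>v - u\<bar> *
     (\<integral>\<^sup>+ \<delta>. ennreal \<bar>h' (\<delta> * v + (1 - \<delta>) * u)\<bar> * indicator {0..1} \<delta> \<partial>lborel)"
proof -
  define F where "F \<delta> = h (\<delta> * v + (1 - \<delta>) * u)" for \<delta>
  define F' where "F' \<delta> = h' (\<delta> * v + (1 - \<delta>) * u) * (v - u)" for \<delta>
  define A where "A \<delta> = \<bar>h' (\<delta> * v + (1 - \<delta>) * u)\<bar>" for \<delta>
  have dF: "(F has_real_derivative F' \<delta>) (at \<delta>)" for \<delta>
    unfolding F_def F'_def by (rule DERIV_chain2[OF hd]) (auto intro!: derivative_eq_intros)
  have cF': "continuous_on {0..1} F'" and cA: "continuous_on {0..1} A"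
    unfolding F'_def A_def by (intro continuous_intros continuous_on_compose2[OF hc]; simp)+
  have "(F' has_integral (F 1 - F 0)) {0..1}"
    by (rule fundamental_theorem_of_calculus)
       (auto intro!: has_field_derivative_at_within dF
         simp: has_real_derivative_iff_has_vector_derivative[symmetric])
  then have "\<bar>h v - h u\<bar> = \<bar>integral {0..1} F'\<bar>"
    by (simp add: integral_unique F_def)
  also have "\<dots> \<le> integral {0..1} (\<lambda>\<delta>. \<bar>v - u\<bar> * A \<delta>)"
    using Henstock_Kurzweil_Integration.integral_norm_bound_integral[of F' "{0..1}" "\<lambda>\<delta>. \<bar>v - u\<bar> * A \<delta>"]
      integrable_continuous_real[OF cF']
      integrable_continuous_real[OF continuous_on_mult[OF continuous_on_const cA, of "\<bar>v - u\<bar>"]]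
    by (auto simp: F'_def A_def abs_mult)
  also have "\<dots> = \<bar>v - u\<bar> * integral {0..1} A"
    by simp
  finally have "\<bar>h v - h u\<bar> \<le> \<bar>v - u\<bar> * integral {0..1} A" .
  moreover have "(\<integral>\<^sup>+ \<delta>. ennreal (A \<delta>) * indicator {0..1} \<delta> \<partial>lborel) = ennreal (integral {0..1} A)"
    using integrable_integral[OF integrable_continuous_real[OF cA]]
    by (rule nn_integral_has_integral_lebesgue'[rotated]) (simp add: A_def)
  moreover have "0 \<le> integral {0..1} A"
    using integrable_continuous_real[OF cA] by (intro integral_nonneg) (auto simp: A_def)
  ultimately show ?thesis
    by (simp add: A_def ennreal_mult[symmetric] ennreal_leI)
qed

lemma abs_powr_diff_le:
  fixes x y p :: real
  assumes "0 \<le> x" "x \<le> 1" "0 \<le> y" "y \<le> 1" "1 \<le> p"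
  shows "\<bar>x powr p - y powr p\<bar> \<le> p * \<bar>x - y\<bar>"
proof -
  have MVT_bound: "b powr p - c powr p \<le> p * (b - c)" if "0 \<le> c" "c < b" "b \<le> 1" for b c :: real
  proof -
    have "continuous_on {c..b} (\<lambda>z. z powr p)"
      using that assms by (intro continuous_on_powr') (auto intro!: continuous_on_id continuous_on_const)
    moreover have "(\<lambda>z. z powr p) differentiable (at z)" if "c < z" "z < b" for z
      using that \<open>0 \<le> c\<close> unfolding real_differentiable_def by (auto intro!: derivative_eq_intros)
    ultimately obtain l z where z: "c < z" "z < b" and dz: "DERIV (\<lambda>z. z powr p) z :> l"
      and eq: "b powr p - c powr p = (b - c) * l"
      using MVT[OF \<open>c < b\<close>] by blast
    have "DERIV (\<lambda>z. z powr p) z :> p * z powr (p - 1)"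
      using z that by (auto intro!: derivative_eq_intros)
    then have "l = p * z powr (p - 1)"
      using dz DERIV_unique by blast
    moreover have "z powr (p - 1) \<le> 1"
      using z that assms by (intro powr_le1) auto
    ultimately show ?thesis
      using eq that assms by (simp add: mult_left_le mult_left_mono mult.commute)
  qed
  have mono: "c powr p \<le> b powr p" if "0 \<le> c" "c \<le> b" for b c :: real
    using that assms by (intro powr_mono2) auto
  show ?thesis
    using MVT_bound[of y x] MVT_bound[of x y] mono[of y x] mono[of x y] assms
    by (cases x y rule: linorder_cases) auto
qed

lemma DERIV_eq_0_at_zero_of_nonneg:
  fixes G G' :: "real \<Rightarrow> real"
  assumes "\<And>e. 0 \<le> G e" "(G has_real_derivative G' e) (at e)" "G e = 0"
  shows "G' e = 0"
  by (rule DERIV_local_min[OF assms(2), of 1]) (use assms in auto)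

lemma ennreal_le_of_tendsto_at_right_0:
  fixes F :: "real \<Rightarrow> real"
  assumes "(F \<longlongrightarrow> L) (at_right 0)" "\<And>\<epsilon>. 0 < \<epsilon> \<Longrightarrow> \<epsilon> \<le> 1 \<Longrightarrow> ennreal (F \<epsilon>) \<le> R"
  shows "ennreal L \<le> R"
proof (rule tendsto_le[OF _ tendsto_const tendsto_ennrealI[OF assms(1)]])
  show "\<forall>\<^sub>F \<epsilon> in at_right 0. ennreal (F \<epsilon>) \<le> R"
    unfolding eventually_at_right[OF zero_less_one] by (intro exI[of _ 1]) (use assms(2) in auto)
qed simp

lemma abs_mult_powr_shift_le:
  fixes x d a \<epsilon> :: real
  assumes x: "0 \<le> x" "x \<le> 1" and d: "x = 0 \<Longrightarrow> d = 0" and a: "0 < a" and \<epsilon>: "0 < \<epsilon>" "\<epsilon> \<le> 1"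
  shows "\<bar>a * (x + \<epsilon>) powr (a - 1) * d\<bar> \<le> a * 2 powr a * \<bar>inverse x * d\<bar>"
proof (cases "x = 0")
  case False
  then have "0 < x"
    using x by auto
  have "(x + \<epsilon>) powr (a - 1) = (x + \<epsilon>) powr a / (x + \<epsilon>)"
    using x \<epsilon> by (simp add: powr_diff)
  also have "\<dots> \<le> 2 powr a / x"
    using x \<epsilon> a \<open>0 < x\<close> by (intro frac_le powr_mono2) auto
  finally have "a * (x + \<epsilon>) powr (a - 1) * \<bar>d\<bar> \<le> a * (2 powr a / x) * \<bar>d\<bar>"
    using a by (intro mult_right_mono mult_left_mono) auto
  then show ?thesis
    using \<open>0 < x\<close> a \<epsilon> by (simp add: abs_mult field_simps)
qed (use d in simp)

text \<open>\<open>G powr a\<close> need not be differentiable where \<open>G\<close> vanishes; \<open>(G + \<epsilon>) powr a\<close> is,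
  and the bound below is uniform in \<open>\<epsilon>\<close>.\<close>

lemma abs_powr_shift_diff_le_log_deriv_integral:
  fixes G G' :: "real \<Rightarrow> real" and a \<epsilon> u v :: real
  assumes G0: "\<And>e. 0 \<le> G e" and G1: "\<And>e. G e \<le> 1"
    and Gd: "\<And>e. (G has_real_derivative G' e) (at e)" and Gc: "continuous_on UNIV G'"
    and a: "a > 0" and \<epsilon>: "0 < \<epsilon>" "\<epsilon> \<le> 1"
  shows "ennreal \<bar>(G v + \<epsilon>) powr a - (G u + \<epsilon>) powr a\<bar> \<le> ennreal (a * 2 powr a * \<bar>v - u\<bar>) *
     (\<integral>\<^sup>+ \<delta>. ennreal \<bar>inverse (G (\<delta> * v + (1 - \<delta>) * u)) * G' (\<delta> * v + (1 - \<delta>) * u)\<bar>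
        * indicator {0..1} \<delta> \<partial>lborel)"
proof -
  define h' where "h' e = a * (G e + \<epsilon>) powr (a - 1) * G' e" for e
  have pos: "G e + \<epsilon> > 0" for e
    using G0[of e] \<epsilon> by linarith
  have hd: "((\<lambda>e. (G e + \<epsilon>) powr a) has_real_derivative h' e) (at e)" for e
    unfolding h'_def using pos[of e]
    by (auto intro!: derivative_eq_intros Gd simp: powr_diff field_simps)
  have hc: "continuous_on UNIV h'"
    unfolding h'_def using pos[THEN less_imp_neq] Gd
    by (intro continuous_intros Gc continuous_at_imp_continuous_on) (auto intro: DERIV_isCont)
  have h'_le: "\<bar>h' e\<bar> \<le> a * 2 powr a * \<bar>inverse (G e) * G' e\<bar>" for e
    unfolding h'_def using G0 G1 a \<epsilon> DERIV_eq_0_at_zero_of_nonneg[of G G' e] Gd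
    by (intro abs_mult_powr_shift_le) auto
  have "ennreal \<bar>(G v + \<epsilon>) powr a - (G u + \<epsilon>) powr a\<bar> \<le> ennreal \<bar>v - u\<bar> *
      (\<integral>\<^sup>+ \<delta>. ennreal \<bar>h' (\<delta> * v + (1 - \<delta>) * u)\<bar> * indicator {0..1} \<delta> \<partial>lborel)"
    by (rule abs_diff_le_nn_integral_deriv_segment[OF hd hc])
  also have "\<dots> \<le> ennreal \<bar>v - u\<bar> * (\<integral>\<^sup>+ \<delta>. ennreal (a * 2 powr a) *
      (ennreal \<bar>inverse (G (\<delta> * v + (1 - \<delta>) * u)) * G' (\<delta> * v + (1 - \<delta>) * u)\<bar> * indicator {0..1} \<delta>) \<partial>lborel)"
    using h'_le a by (intro mult_left_mono nn_integral_mono)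
      (auto simp: indicator_def ennreal_mult[symmetric] intro!: ennreal_leI)
  also have "\<dots> = ennreal (a * 2 powr a * \<bar>v - u\<bar>) *
     (\<integral>\<^sup>+ \<delta>. ennreal \<bar>inverse (G (\<delta> * v + (1 - \<delta>) * u)) * G' (\<delta> * v + (1 - \<delta>) * u)\<bar>
        * indicator {0..1} \<delta> \<partial>lborel)"
  proof -
    have [measurable]: "G \<in> borel_measurable borel" "G' \<in> borel_measurable borel"
      using Gd Gc by (auto intro!: borel_measurable_continuous_onI continuous_at_imp_continuous_on
          DERIV_isCont)
    show ?thesis
      using a by (subst nn_integral_cmult) (auto simp: ennreal_mult mult_ac)
  qed
  finally show ?thesis .
qed

lemma abs_powr_diff_le_log_deriv_integral:
  fixes G G' :: "real \<Rightarrow> real" and a u v :: real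
  assumes G0: "\<And>e. 0 \<le> G e" and G1: "\<And>e. G e \<le> 1"
    and Gd: "\<And>e. (G has_real_derivative G' e) (at e)" and Gc: "continuous_on UNIV G'" and a: "a > 0"
  shows "ennreal \<bar>G v powr a - G u powr a\<bar> \<le> ennreal (a * 2 powr a * \<bar>v - u\<bar>) *
     (\<integral>\<^sup>+ \<delta>. ennreal \<bar>inverse (G (\<delta> * v + (1 - \<delta>) * u)) * G' (\<delta> * v + (1 - \<delta>) * u)\<bar>
        * indicator {0..1} \<delta> \<partial>lborel)"
proof (rule ennreal_le_of_tendsto_at_right_0)
  have "((\<lambda>\<epsilon>. (G x + \<epsilon>) powr a) \<longlongrightarrow> G x powr a) (at_right 0)" for x
  proof (rule tendsto_powr')
    show "((\<lambda>\<epsilon>. G x + \<epsilon>) \<longlongrightarrow> G x) (at_right 0)"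
      using tendsto_add[OF tendsto_const[of "G x"] tendsto_ident_at[of 0 "{0<..}"]] by simp
    show "G x \<noteq> 0 \<or> 0 < a \<and> (\<forall>\<^sub>F \<epsilon> in at_right 0. 0 \<le> G x + \<epsilon>)"
      using a G0[of x] by (auto intro: eventually_mono[OF eventually_at_right_less])
  qed auto
  then show "((\<lambda>\<epsilon>. \<bar>(G v + \<epsilon>) powr a - (G u + \<epsilon>) powr a\<bar>) \<longlongrightarrow> \<bar>G v powr a - G u powr a\<bar>)
      (at_right 0)"
    by (intro tendsto_rabs tendsto_diff)
qed (rule abs_powr_shift_diff_le_log_deriv_integral[OF assms])

lemma abs_suminf_powr_diff_le:
  fixes q r :: "nat \<Rightarrow> real" and p :: real
  assumes q: "\<And>y. 0 \<le> q y" "\<And>y. q y \<le> 1" "summable q"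
    and r: "\<And>y. 0 \<le> r y" "\<And>y. r y \<le> 1" "summable r" and p: "1 \<le> p"
  shows "\<bar>(\<Sum>y. q y powr p) - (\<Sum>y. r y powr p)\<bar> \<le> p * (\<Sum>y. \<bar>q y - r y\<bar>)"
proof -
  have powr_summable: "summable (\<lambda>y. s y powr p)"
    if "\<And>y. 0 \<le> s y" "\<And>y. s y \<le> 1" "summable s" for s :: "nat \<Rightarrow> real"
  proof (rule summable_comparison_test'[OF \<open>summable s\<close>])
    show "norm (s y powr p) \<le> s y" for y
      using that(1,2)[of y] p powr_le_one_le[of "s y" p] by (cases "s y = 0") auto
  qed
  have diff_summable: "summable (\<lambda>y. \<bar>q y - r y\<bar>)"
  proof (rule summable_comparison_test'[OF summable_add[OF q(3) r(3)]])
    show "norm \<bar>q y - r y\<bar> \<le> q y + r y" for y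
      using q(1)[of y] r(1)[of y] by auto
  qed
  have "\<bar>(\<Sum>y. q y powr p) - (\<Sum>y. r y powr p)\<bar> = \<bar>\<Sum>y. q y powr p - r y powr p\<bar>"
    using suminf_diff[OF powr_summable[OF q] powr_summable[OF r]] by simp
  also have "\<dots> \<le> (\<Sum>y. \<bar>q y powr p - r y powr p\<bar>)"
    using abs_powr_diff_le[OF q(1,2) r(1,2) p]
    by (intro summable_rabs summable_comparison_test'[OF summable_mult[OF diff_summable, of p]]) auto
  also have "\<dots> \<le> (\<Sum>y. p * \<bar>q y - r y\<bar>)"
    using abs_powr_diff_le[OF q(1,2) r(1,2) p]
    by (intro suminf_le summable_mult[OF diff_summable]
        summable_comparison_test'[OF summable_mult[OF diff_summable, of p]]) auto
  also have "\<dots> = p * (\<Sum>y. \<bar>q y - r y\<bar>)"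
    using suminf_mult[OF diff_summable] by simp
  finally show ?thesis .
qed

lemma suminf_abs_diff_le_phi_integral:
  fixes g g' :: "nat \<Rightarrow> real \<Rightarrow> real"
  assumes gd: "\<And>y e. (g y has_real_derivative g' y e) (at e)"
    and gc: "\<And>y. continuous_on UNIV (g' y)" and g's: "\<And>e. summable (\<lambda>y. \<bar>g' y e\<bar>)"
  shows "(\<Sum>y. ennreal \<bar>g y v - g y u\<bar>) \<le> ennreal \<bar>v - u\<bar> *
     (\<integral>\<^sup>+ \<delta>. ennreal (phi_fun g (\<delta> * v + (1 - \<delta>) * u)) * indicator {0..1} \<delta> \<partial>lborel)"
proof -
  have [measurable]: "g' y \<in> borel_measurable borel" for y
    using gc by (auto intro: borel_measurable_continuous_onI)
  have deriv_g: "deriv (g y) = g' y" for y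
    using gd by (intro ext DERIV_imp_deriv) auto
  have "(\<Sum>y. ennreal \<bar>g y v - g y u\<bar>) \<le> (\<Sum>y. ennreal \<bar>v - u\<bar> *
      (\<integral>\<^sup>+ \<delta>. ennreal \<bar>g' y (\<delta> * v + (1 - \<delta>) * u)\<bar> * indicator {0..1} \<delta> \<partial>lborel))"
    by (intro suminf_le abs_diff_le_nn_integral_deriv_segment gd gc) auto
  also have "\<dots> = ennreal \<bar>v - u\<bar> *
      (\<integral>\<^sup>+ \<delta>. (\<Sum>y. ennreal \<bar>g' y (\<delta> * v + (1 - \<delta>) * u)\<bar> * indicator {0..1} \<delta>) \<partial>lborel)"
    by (subst nn_integral_suminf) auto
  also have "(\<lambda>\<delta>. \<Sum>y. ennreal \<bar>g' y (\<delta> * v + (1 - \<delta>) * u)\<bar> * indicator {0..1} \<delta>)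
      = (\<lambda>\<delta>. ennreal (phi_fun g (\<delta> * v + (1 - \<delta>) * u)) * indicator {0..1} \<delta>)"
    unfolding phi_fun_def deriv_g using g's
    by (simp add: ennreal_suminf_multc suminf_ennreal2[symmetric])
  finally show ?thesis .
qed

lemma le_1_if_nonneg_sums_1:
  fixes q :: "nat \<Rightarrow> real"
  assumes "\<And>y. 0 \<le> q y" "q sums 1"
  shows "q y \<le> 1"
  using sum_le_suminf[of q "{y}"] assms by (simp add: sums_iff)

lemma abs_dpd_diff_le_sum:
  fixes g :: "nat \<Rightarrow> real \<Rightarrow> real" and a u v :: real and yobs :: nat
  assumes g0: "\<And>y e. 0 \<le> g y e" and gs: "\<And>e. (\<lambda>y. g y e) sums 1" and a: "a > 0"
  shows "\<bar>dpd g a yobs u - dpd g a yobs v\<bar>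
    \<le> (1 + a) * (\<Sum>y. \<bar>g y u - g y v\<bar>) + (1 + 1 / a) * \<bar>g yobs v powr a - g yobs u powr a\<bar>"
proof -
  have "dpd g a yobs u - dpd g a yobs v = ((\<Sum>y. g y u powr (1 + a)) - (\<Sum>y. g y v powr (1 + a)))
      + (1 + 1 / a) * (g yobs v powr a - g yobs u powr a)"
    unfolding dpd_def by (simp add: algebra_simps)
  then have "\<bar>dpd g a yobs u - dpd g a yobs v\<bar>
      \<le> \<bar>(\<Sum>y. g y u powr (1 + a)) - (\<Sum>y. g y v powr (1 + a))\<bar>
        + (1 + 1 / a) * \<bar>g yobs v powr a - g yobs u powr a\<bar>"
    using a by (simp add: abs_triangle_ineq[THEN order_trans] abs_mult)
  also have "\<dots> \<le> (1 + a) * (\<Sum>y. \<bar>g y u - g y v\<bar>) + (1 + 1 / a) * \<bar>g yobs v powr a - g yobs u powr a\<bar>"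
    using a g0 gs le_1_if_nonneg_sums_1[OF g0 gs] by (intro add_right_mono abs_suminf_powr_diff_le)
      (auto simp: sums_iff)
  finally show ?thesis .
qed

lemma abs_dpd_diff_le:
  fixes g g' :: "nat \<Rightarrow> real \<Rightarrow> real" and a u v :: real and yobs :: nat
  assumes g0: "\<And>y e. 0 \<le> g y e" and gs: "\<And>e. (\<lambda>y. g y e) sums 1"
    and gd: "\<And>y e. (g y has_real_derivative g' y e) (at e)"
    and gc: "\<And>y. continuous_on UNIV (g' y)" and g's: "\<And>e. summable (\<lambda>y. \<bar>g' y e\<bar>)"
    and a: "a > 0"
  shows "ennreal \<bar>dpd g a yobs u - dpd g a yobs v\<bar> \<le> ennreal ((1 + a) * 2 powr a * \<bar>v - u\<bar>) *
     ((\<integral>\<^sup>+ \<delta>. ennreal (phi_fun g (\<delta> * v + (1 - \<delta>) * u)) * indicator {0..1} \<delta> \<partial>lborel) +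
      (\<integral>\<^sup>+ \<delta>. ennreal (psi_fun g yobs (\<delta> * v + (1 - \<delta>) * u)) * indicator {0..1} \<delta> \<partial>lborel))"
    (is "_ \<le> ennreal ?c * (?I\<phi> + ?I\<psi>)")
proof -
  have g_summable: "summable (\<lambda>y. g y e)" for e
    using gs by (auto simp: sums_iff)
  have g1: "g y e \<le> 1" for y e
    by (rule le_1_if_nonneg_sums_1[OF g0 gs])
  have diff_summable: "summable (\<lambda>y. \<bar>g y u - g y v\<bar>)"
    using g0 by (intro summable_comparison_test'[OF summable_add[OF g_summable[of u] g_summable[of v]]])
      (auto simp: abs_if)
  have "ennreal \<bar>dpd g a yobs u - dpd g a yobs v\<bar> \<le> ennreal (1 + a) * (\<Sum>y. ennreal \<bar>g y v - g y u\<bar>)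
      + ennreal (1 + 1 / a) * ennreal \<bar>g yobs v powr a - g yobs u powr a\<bar>"
    using abs_dpd_diff_le_sum[OF g0 gs a, where u=u and v=v and yobs=yobs] a diff_summable
    by (simp add: suminf_ennreal2 abs_minus_commute ennreal_mult[symmetric] ennreal_plus[symmetric]
        suminf_nonneg ennreal_leI del: ennreal_plus)
  also have "\<dots> \<le> ennreal (1 + a) * (ennreal \<bar>v - u\<bar> * ?I\<phi>)
      + ennreal (1 + 1 / a) * (ennreal (a * 2 powr a * \<bar>v - u\<bar>) * ?I\<psi>)"
    using abs_powr_diff_le_log_deriv_integral[OF g0 g1 gd gc a, of yobs v u]
      suminf_abs_diff_le_phi_integral[OF gd gc g's, of v u]
    by (intro add_mono mult_left_mono) (auto simp: psi_fun_def DERIV_imp_deriv[OF gd] ext)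
  also have "\<dots> \<le> ennreal ?c * ?I\<phi> + ennreal ?c * ?I\<psi>"
  proof (intro add_mono)
    have "1 \<le> 2 powr a"
      using a by (intro ge_one_powr_ge_zero) auto
    then have "(1 + a) * \<bar>v - u\<bar> \<le> ?c"
      using a by (simp add: mult_right_mono mult_le_cancel_left1)
    moreover have "ennreal (1 + a) * (ennreal \<bar>v - u\<bar> * ?I\<phi>) = ennreal ((1 + a) * \<bar>v - u\<bar>) * ?I\<phi>"
      using a by (simp add: ennreal_mult mult.assoc)
    ultimately show "ennreal (1 + a) * (ennreal \<bar>v - u\<bar> * ?I\<phi>) \<le> ennreal ?c * ?I\<phi>"
      by (simp add: mult_right_mono ennreal_leI)
    have "ennreal (1 + 1 / a) * (ennreal (a * 2 powr a * \<bar>v - u\<bar>) * ?I\<psi>)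
        = ennreal ((1 + 1 / a) * (a * 2 powr a * \<bar>v - u\<bar>)) * ?I\<psi>"
      using a by (simp add: ennreal_mult mult.assoc del: ennreal_plus)
    also have "(1 + 1 / a) * (a * 2 powr a * \<bar>v - u\<bar>) = ?c"
      using a by (simp add: field_simps)
    finally show "ennreal (1 + 1 / a) * (ennreal (a * 2 powr a * \<bar>v - u\<bar>) * ?I\<psi>) \<le> ennreal ?c * ?I\<psi>"
      by simp
  qed
  finally show ?thesis
    by (simp add: distrib_left)
qed

lemma SUP_eq_SUP_dense_of_SUP_continuous:
  fixes F :: "'a::metric_space \<Rightarrow> ennreal" and h :: "nat \<Rightarrow> 'a \<Rightarrow> real"
  assumes DS: "D \<subseteq> S" and SD: "S \<subseteq> closure D" and hc: "\<And>i. continuous_on S (h i)"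
    and F: "\<And>\<theta>. \<theta> \<in> S \<Longrightarrow> F \<theta> = (SUP i. ennreal (h i \<theta>))"
  shows "(SUP \<theta>\<in>S. F \<theta>) = (SUP \<theta>\<in>D. F \<theta>)"
proof (rule antisym)
  show "(SUP \<theta>\<in>D. F \<theta>) \<le> (SUP \<theta>\<in>S. F \<theta>)"
    using DS by (rule SUP_subset_mono) simp
  show "(SUP \<theta>\<in>S. F \<theta>) \<le> (SUP \<theta>\<in>D. F \<theta>)"
  proof (intro SUP_least)
    fix \<theta> assume \<theta>: "\<theta> \<in> S"
    show "F \<theta> \<le> (SUP \<theta>\<in>D. F \<theta>)"
      unfolding F[OF \<theta>]
    proof (rule SUP_least)
      fix i
      have "\<theta> \<in> closure D"
        using \<theta> SD by blast
      then obtain d where d: "\<And>n. d n \<in> D" "d \<longlonglongrightarrow> \<theta>"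
        unfolding closure_sequential by blast
      have "(\<lambda>n. h i (d n)) \<longlonglongrightarrow> h i \<theta>"
        using d DS by (intro continuous_on_tendsto_compose[OF hc d(2) \<theta>] always_eventually) auto
      moreover have "ennreal (h i (d n)) \<le> (SUP \<theta>\<in>D. F \<theta>)" for n
      proof -
        have dn: "d n \<in> S"
          using d DS by auto
        have "ennreal (h i (d n)) \<le> F (d n)"
          unfolding F[OF dn] by (rule SUP_upper) simp
        also have "\<dots> \<le> (SUP \<theta>\<in>D. F \<theta>)"
          using d by (auto intro: SUP_upper)
        finally show ?thesis .
      qed
      ultimately show "ennreal (h i \<theta>) \<le> (SUP \<theta>\<in>D. F \<theta>)"
        by (intro LIMSEQ_le_const2[OF tendsto_ennrealI]) auto
    qed
  qed
qed

lemma borel_measurable_SUP_of_SUP_continuous: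
  fixes \<Theta> :: "'a::{metric_space, second_countable_topology} set"
    and F :: "'a \<Rightarrow> 'b \<Rightarrow> ennreal" and h :: "nat \<Rightarrow> 'a \<Rightarrow> 'b \<Rightarrow> real"
  assumes "\<And>\<theta>. \<theta> \<in> \<Theta> \<Longrightarrow> F \<theta> \<in> borel_measurable N"
    and "\<And>\<theta> x. \<theta> \<in> \<Theta> \<Longrightarrow> F \<theta> x = (SUP i. ennreal (h i \<theta> x))"
    and "\<And>i x. continuous_on \<Theta> (\<lambda>\<theta>. h i \<theta> x)"
  shows "(\<lambda>x. SUP \<theta>\<in>\<Theta>. F \<theta> x) \<in> borel_measurable N"
proof -
  obtain D where D: "countable D" "D \<subseteq> \<Theta>" "\<Theta> \<subseteq> closure D"
    by (rule separable)
  have "(\<lambda>x. SUP \<theta>\<in>\<Theta>. F \<theta> x) = (\<lambda>x. SUP \<theta>\<in>D. F \<theta> x)"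
    using D(2,3) assms(2,3) by (intro ext SUP_eq_SUP_dense_of_SUP_continuous) auto
  moreover have "(\<lambda>x. SUP \<theta>\<in>D. F \<theta> x) \<in> borel_measurable N"
    using D(1,2) assms(1) by (intro borel_measurable_SUP) auto
  ultimately show ?thesis
    by simp
qed

lemma ennreal_suminf_abs_eq_SUP:
  fixes f :: "nat \<Rightarrow> real"
  assumes "summable (\<lambda>y. \<bar>f y\<bar>)"
  shows "ennreal (\<Sum>y. \<bar>f y\<bar>) = (SUP N. ennreal (\<Sum>y<N. \<bar>f y\<bar>))"
  using assms by (simp add: suminf_ennreal2[symmetric] suminf_eq_SUP)

lemma ennreal_abs_log_deriv_eq_SUP:
  fixes G G' :: "real \<Rightarrow> real"
  assumes G0: "\<And>e. 0 \<le> G e" and Gd: "(G has_real_derivative G' e) (at e)"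
  shows "ennreal \<bar>inverse (G e) * G' e\<bar> = (SUP N. ennreal (\<bar>G' e\<bar> / (G e + inverse (real (Suc N)))))"
proof (cases "G e = 0")
  case True
  then show ?thesis
    using DERIV_eq_0_at_zero_of_nonneg[of G G' e] G0 Gd by simp
next
  case False
  then have Gp: "G e > 0"
    using G0[of e] by auto
  let ?s = "\<lambda>N. ennreal (\<bar>G' e\<bar> / (G e + inverse (real (Suc N))))"
  have "incseq ?s"
  proof (rule incseq_SucI)
    fix N
    have "inverse (real (Suc (Suc N))) \<le> inverse (real (Suc N))"
      by (simp add: field_simps)
    then show "?s N \<le> ?s (Suc N)"
      using Gp by (intro ennreal_leI frac_le) (auto intro: add_pos_pos)
  qed
  then have "?s \<longlonglongrightarrow> (SUP N. ?s N)"
    by (rule LIMSEQ_SUP)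
  moreover have "(\<lambda>N. \<bar>G' e\<bar> / (G e + inverse (real (Suc N)))) \<longlonglongrightarrow> \<bar>G' e\<bar> / (G e + 0)"
    using Gp by (intro tendsto_intros LIMSEQ_inverse_real_of_nat) auto
  then have "?s \<longlonglongrightarrow> ennreal (\<bar>G' e\<bar> / G e)"
    by (intro tendsto_ennrealI) simp
  ultimately have "(SUP N. ?s N) = ennreal (\<bar>G' e\<bar> / G e)"
    using LIMSEQ_unique by blast
  then show ?thesis
    using Gp by (simp add: abs_mult divide_inverse mult.commute)
qed

lemma sum_mult_le_mult_suminf_shift:
  fixes c :: "nat \<Rightarrow> real"
  assumes c0: "\<And>t. 0 \<le> c t" and cs: "summable c"
  shows "(\<Sum>t=N..n. real t * c t) \<le> real n * (\<Sum>k. c (k + N))"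
proof -
  have "(\<Sum>t=N..n. real t * c t) \<le> (\<Sum>t=N..n. real n * c t)"
    using c0 by (intro sum_mono mult_right_mono) auto
  also have "(\<Sum>t=N..n. c t) \<le> (\<Sum>k. c (k + N))"
  proof (cases "N \<le> n")
    case True
    then have "(\<Sum>t=N..n. c t) = (\<Sum>k\<in>{0..n - N}. c (k + N))"
      by (intro sum.reindex_bij_witness[of _ "\<lambda>k. k + N" "\<lambda>t. t - N"]) auto
    also have "\<dots> \<le> (\<Sum>k. c (k + N))"
      using c0 by (intro sum_le_suminf summable_ignore_initial_segment[OF cs]) auto
    finally show ?thesis .
  qed (use c0 cs in \<open>auto intro: suminf_nonneg summable_ignore_initial_segment\<close>)
  then have "(\<Sum>t=N..n. real n * c t) \<le> real n * (\<Sum>k. c (k + N))"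
    by (simp add: sum_distrib_left[symmetric] mult_left_mono)
  finally show ?thesis .
qed

lemma cesaro_mean_tendsto_0_of_summable_div:
  fixes b :: "nat \<Rightarrow> real"
  assumes b0: "\<And>t. 0 \<le> b t" and bs: "summable (\<lambda>t. b (Suc t) / real (Suc t))"
  shows "(\<lambda>n. (\<Sum>t=1..n. b t) / real n) \<longlonglongrightarrow> 0"
proof (rule LIMSEQ_I)
  fix r :: real assume r: "r > 0"
  define c where "c t = b t / real t" for t
  have c0: "0 \<le> c t" for t
    using b0 by (simp add: c_def)
  have cs: "summable c"
    using bs by (simp add: c_def summable_Suc_iff[of c, symmetric])
  obtain N where N: "1 \<le> N" "(\<Sum>k. c (k + N)) < r / 2"
    using suminf_exist_split[OF half_gt_zero[OF r] cs] by (metis abs_le_D1 le_less_trans max.cobounded1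
        max.cobounded2 real_norm_def order_refl)
  define K where "K = (\<Sum>t\<in>{1..<N}. b t)"
  obtain n0 :: nat where n0: "2 * K / r < real n0"
    using reals_Archimedean2 by blast
  show "\<exists>no. \<forall>n\<ge>no. norm ((\<Sum>t=1..n. b t) / real n - 0) < r"
  proof (intro exI[of _ "max N (Suc n0)"] allI impI)
    fix n assume n: "n \<ge> max N (Suc n0)"
    have "(\<Sum>t=1..n. b t) = K + (\<Sum>t=N..n. b t)"
    proof -
      have "{1..n} = {1..<N} \<union> {N..n}"
        using n N by auto
      then show ?thesis
        unfolding K_def by (simp add: sum.union_disjoint ivl_disj_int)
    qed
    also have "(\<Sum>t=N..n. b t) = (\<Sum>t=N..n. real t * c t)"
      using N by (intro sum.cong) (auto simp: c_def)
    also have "\<dots> \<le> real n * (\<Sum>k. c (k + N))"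
      by (rule sum_mult_le_mult_suminf_shift[OF c0 cs])
    finally have "(\<Sum>t=1..n. b t) / real n \<le> K / real n + (\<Sum>k. c (k + N))"
      using n by (simp add: field_simps)
    moreover have "K / real n < r / 2"
    proof -
      have "real n0 < real n"
        using n by simp
      then have "2 * K / r < real n"
        using n0 by linarith
      then show ?thesis
        using n r by (simp add: field_simps)
    qed
    ultimately have "(\<Sum>t=1..n. b t) / real n < r"
      using N(2) by linarith
    moreover have "0 \<le> (\<Sum>t=1..n. b t)"
      using b0 by (intro sum_nonneg) auto
    ultimately show "norm ((\<Sum>t=1..n. b t) / real n - 0) < r"
      by simp
  qed
qed

lemma bigO_imp_le_const_mult:
  fixes f g :: "nat \<Rightarrow> real"
  assumes fg: "f \<in> O(g)" and g: "\<And>k. 0 < g k"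
  obtains c where "0 < c" "\<And>k. \<bar>f k\<bar> \<le> c * g k"
proof -
  obtain c N where c: "0 < c" and N: "\<And>k. N \<le> k \<Longrightarrow> \<bar>f k\<bar> \<le> c * g k"
  proof -
    from fg obtain c where "0 < c" "eventually (\<lambda>k. norm (f k) \<le> c * norm (g k)) at_top"
      by (elim landau_o.bigE)
    then show ?thesis
      using that g by (auto simp: eventually_at_top_linorder abs_of_pos)
  qed
  define c' where "c' = c + (\<Sum>k<N. \<bar>f k\<bar> / g k)"
  have "\<bar>f k\<bar> \<le> c' * g k" for k
  proof (cases "N \<le> k")
    case True
    have "c \<le> c'"
      unfolding c'_def using g by (intro add_increasing2 sum_nonneg) (auto simp: less_imp_le)
    then show ?thesis
      using N[OF True] g[of k] by (meson order_trans mult_right_mono less_imp_le)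
  next
    case False
    have "\<bar>f k\<bar> / g k \<le> (\<Sum>k<N. \<bar>f k\<bar> / g k)"
      using False g by (intro member_le_sum) (auto simp: less_imp_le)
    also have "\<dots> \<le> c'"
      unfolding c'_def using c by simp
    finally show ?thesis
      using g[of k] by (simp add: divide_le_eq)
  qed
  moreover have "0 < c'"
    unfolding c'_def using c g by (intro add_pos_nonneg sum_nonneg) (auto simp: less_imp_le)
  ultimately show ?thesis
    using that by blast
qed

lemma powr_le_telescope:
  fixes gam x :: real
  assumes gam: "gam > 1" and x: "x \<ge> 1"
  shows "x powr (- gam) \<le> 2 powr gam / (gam - 1) * (x powr (1 - gam) - (x + 1) powr (1 - gam))"
proof -
  have "continuous_on {x..x+1} (\<lambda>z. z powr (1 - gam))"
    using x by (intro continuous_intros) auto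
  moreover have "(\<lambda>z. z powr (1 - gam)) differentiable (at z)" if "x < z" for z
    using that x unfolding real_differentiable_def by (auto intro!: derivative_eq_intros exI)
  ultimately obtain z where z: "x < z" "z < x + 1"
    and dz: "DERIV (\<lambda>z. z powr (1 - gam)) z :> (x + 1) powr (1 - gam) - x powr (1 - gam)"
    using MVT[of x "x + 1" "\<lambda>z. z powr (1 - gam)"] by auto
  have "DERIV (\<lambda>z. z powr (1 - gam)) z :> (1 - gam) * z powr (- gam)"
    using z x by (auto intro!: derivative_eq_intros)
  then have "(x + 1) powr (1 - gam) - x powr (1 - gam) = (1 - gam) * z powr (- gam)"
    using dz DERIV_unique by blast
  moreover have "(gam - 1) * (x + 1) powr (- gam) \<le> (gam - 1) * z powr (- gam)"
    using z x gam by (intro mult_left_mono powr_mono2') auto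
  ultimately have mean_value: "(gam - 1) * (x + 1) powr (- gam) \<le> x powr (1 - gam) - (x + 1) powr (1 - gam)"
    by (simp add: algebra_simps)
  have "(x + 1) powr gam \<le> (2 * x) powr gam"
    using gam x by (intro powr_mono2) auto
  also have "\<dots> = 2 powr gam * x powr gam"
    using x by (simp add: powr_mult)
  finally have "x powr (- gam) \<le> 2 powr gam * (x + 1) powr (- gam)"
    using x gam by (simp add: powr_minus field_simps)
  also have "\<dots> \<le> 2 powr gam * ((x powr (1 - gam) - (x + 1) powr (1 - gam)) / (gam - 1))"
    using mean_value gam by (intro mult_left_mono) (auto simp: field_simps)
  finally show ?thesis
    by (simp add: field_simps)
qed

lemma tail_suminf_le_powr:
  fixes alpha :: "nat \<Rightarrow> real" and gam :: real
  assumes alpha0: "\<And>k. 0 \<le> alpha k" and gam: "1 < gam"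
    and alpha_O: "alpha \<in> O(\<lambda>k. real (Suc k) powr (- gam))"
  obtains K where "0 < K" "summable alpha"
    "\<And>m. (\<Sum>k. alpha (k + m)) \<le> K * real (Suc m) powr (1 - gam)"
proof -
  obtain c where c: "0 < c" "\<And>k. \<bar>alpha k\<bar> \<le> c * real (Suc k) powr (- gam)"
    by (rule bigO_imp_le_const_mult[OF alpha_O]) auto
  define f where "f k = real (Suc k) powr (1 - gam)" for k
  define K where "K = c * 2 powr gam / (gam - 1)"
  have "f \<longlonglongrightarrow> 0"
    unfolding f_def using gam
    by (intro tendsto_neg_powr filterlim_compose[OF filterlim_real_sequentially filterlim_Suc]) auto
  have telescope: "(\<lambda>k. K * (f (k + m) - f (Suc (k + m)))) sums (K * f m)" for m
  proof (rule sums_mult)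
    show "(\<lambda>k. f (k + m) - f (Suc (k + m))) sums f m"
      using telescope_sums'[OF LIMSEQ_ignore_initial_segment[OF \<open>f \<longlonglongrightarrow> 0\<close>, of m]] by simp
  qed
  have le: "alpha k \<le> K * (f k - f (Suc k))" for k
  proof -
    have Suc_eq: "real (Suc k) + 1 = real (Suc (Suc k))"
      by simp
    have "alpha k \<le> c * real (Suc k) powr (- gam)"
      using c(2)[of k] by simp
    also have "\<dots> \<le> c * (2 powr gam / (gam - 1) * (f k - f (Suc k)))"
      using c(1) powr_le_telescope[OF gam, of "real (Suc k)"]
      unfolding Suc_eq f_def by (intro mult_left_mono) auto
    also have "\<dots> = K * (f k - f (Suc k))"
      by (simp add: K_def mult.assoc)
    finally show ?thesis .
  qed
  have tail: "summable (\<lambda>k. alpha (k + m)) \<and> (\<Sum>k. alpha (k + m)) \<le> K * f m" for m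
  proof
    have bound: "norm (alpha (k + m)) \<le> K * (f (k + m) - f (Suc (k + m)))" for k
      using le[of "k + m"] alpha0[of "k + m"] by simp
    show summable: "summable (\<lambda>k. alpha (k + m))"
      by (rule summable_comparison_test'[OF sums_summable[OF telescope[of m]] bound])
    have "(\<Sum>k. alpha (k + m)) \<le> (\<Sum>k. K * (f (k + m) - f (Suc (k + m))))"
      by (rule suminf_le[OF _ summable sums_summable[OF telescope[of m]]]) (rule le)
    then show "(\<Sum>k. alpha (k + m)) \<le> K * f m"
      using telescope[of m] by (simp add: sums_iff)
  qed
  show ?thesis
  proof (rule that)
    show "0 < K"
      unfolding K_def using c gam by simp
  qed (use tail[of 0] tail in \<open>auto simp: f_def\<close>)
qed

lemma ennreal_mult_le_weighted_squares:
  fixes x p :: real and y :: ennreal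
  assumes x: "0 \<le> x" and p: "0 < p"
  shows "ennreal x * y \<le> ennreal (p / 2) * ennreal (x\<^sup>2) + y\<^sup>2 * ennreal (1 / (2 * p))"
proof (cases y)
  case (real r)
  have "0 \<le> (p * x - r)\<^sup>2"
    by simp
  then have "x * r \<le> p / 2 * x\<^sup>2 + r\<^sup>2 * (1 / (2 * p))"
    using p by (simp add: field_simps power2_eq_square)
  then have "ennreal (x * r) \<le> ennreal (p / 2 * x\<^sup>2) + ennreal (r\<^sup>2 * (1 / (2 * p)))"
    using p by (simp add: ennreal_plus[symmetric] ennreal_leI del: ennreal_plus)
  moreover have "ennreal (p / 2 * x\<^sup>2) = ennreal (p / 2) * ennreal (x\<^sup>2)"
    and "ennreal (r\<^sup>2 * (1 / (2 * p))) = y\<^sup>2 * ennreal (1 / (2 * p))"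
    using p real by (simp_all add: ennreal_mult'[symmetric] ennreal_power)
  ultimately show ?thesis
    using real x by (simp add: ennreal_mult)
next
  case top
  then show ?thesis
    using x p by (cases "x = 0") (auto simp: ennreal_mult_top ennreal_top_mult)
qed

lemma ennreal_weighted_sum_mult_le:
  fixes c z :: "nat \<Rightarrow> real" and y :: ennreal
  assumes c: "\<And>k. 0 \<le> c k" and z: "\<And>k. 0 \<le> z k" and p: "0 < p"
  shows "(\<Sum>k. ennreal (c k * z k)) * y \<le> (\<Sum>k. ennreal (c k) * ennreal (p / 2) * ennreal ((z k)\<^sup>2))
    + (\<Sum>k. ennreal (c k)) * ennreal (1 / (2 * p)) * y\<^sup>2"
proof -
  have "(\<Sum>k. ennreal (c k * z k)) * y = (\<Sum>k. ennreal (c k) * (ennreal (z k) * y))"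
    using c z by (simp add: ennreal_suminf_multc[symmetric] ennreal_mult mult.assoc)
  also have "\<dots> \<le> (\<Sum>k. ennreal (c k) * (ennreal (p / 2) * ennreal ((z k)\<^sup>2) + y\<^sup>2 * ennreal (1 / (2 * p))))"
    using z p by (intro suminf_le mult_left_mono ennreal_mult_le_weighted_squares) auto
  also have "\<dots> = (\<Sum>k. ennreal (c k) * ennreal (p / 2) * ennreal ((z k)\<^sup>2))
      + (\<Sum>k. ennreal (c k)) * ennreal (1 / (2 * p)) * y\<^sup>2"
    by (simp add: distrib_left suminf_add[symmetric] mult_ac)
  finally show ?thesis .
qed

lemma (in prob_space) nn_integral_segment_integral_square_le:
  fixes G :: "'a \<Rightarrow> real \<Rightarrow> ennreal"
  assumes G: "(\<lambda>(w, \<delta>). G w \<delta>) \<in> borel_measurable (M \<Otimes>\<^sub>M lborel)"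
    and G2: "\<And>\<delta>. \<delta> \<in> {0..1} \<Longrightarrow> (\<integral>\<^sup>+ w. (G w \<delta>)\<^sup>2 \<partial>M) \<le> q"
  shows "(\<integral>\<^sup>+ w. (\<integral>\<^sup>+ \<delta>. (G w \<delta>)\<^sup>2 * indicator {0..1} \<delta> \<partial>lborel) \<partial>M) \<le> q"
proof -
  interpret P: pair_sigma_finite M lborel
    by (simp add: pair_sigma_finite_def prob_space_imp_sigma_finite prob_space_axioms
        lborel.sigma_finite_measure_axioms)
  have [measurable]: "(\<lambda>w. G w \<delta>) \<in> borel_measurable M" for \<delta>
    using measurable_compose[OF measurable_Pair2'[of \<delta> lborel M] G] by simp
  note G[measurable]
  have "(\<integral>\<^sup>+ w. (\<integral>\<^sup>+ \<delta>. (G w \<delta>)\<^sup>2 * indicator {0..1} \<delta> \<partial>lborel) \<partial>M)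
      = (\<integral>\<^sup>+ \<delta>. (\<integral>\<^sup>+ w. (G w \<delta>)\<^sup>2 * indicator {0..1} \<delta> \<partial>M) \<partial>lborel)"
    by (rule P.Fubini'[symmetric]) measurable
  also have "\<dots> = (\<integral>\<^sup>+ \<delta>. (\<integral>\<^sup>+ w. (G w \<delta>)\<^sup>2 \<partial>M) * indicator {0..1} \<delta> \<partial>lborel)"
    by (intro nn_integral_cong nn_integral_multc) measurable
  also have "\<dots> \<le> (\<integral>\<^sup>+ \<delta>. q * indicator {0..1::real} \<delta> \<partial>lborel)"
    using G2 by (intro nn_integral_mono) (auto simp: indicator_def)
  also have "\<dots> = q"
    by (simp add: nn_integral_cmult_indicator)
  finally show ?thesis .
qed

text \<open>AM--GM applied termwise, balanced by \<open>p\<close>, takes the place of Cauchy--Schwarz: only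
  second moments of the \<open>Z k\<close> and of \<open>G\<close> are needed.\<close>

lemma (in prob_space) nn_integral_weighted_sum_mult_segment_integral_le:
  fixes G :: "'a \<Rightarrow> real \<Rightarrow> ennreal" and Z :: "nat \<Rightarrow> 'a \<Rightarrow> real" and c :: "nat \<Rightarrow> real"
  assumes G: "(\<lambda>(w, \<delta>). G w \<delta>) \<in> borel_measurable (M \<Otimes>\<^sub>M lborel)"
    and G2: "\<And>\<delta>. \<delta> \<in> {0..1} \<Longrightarrow> (\<integral>\<^sup>+ w. (G w \<delta>)\<^sup>2 \<partial>M) \<le> ennreal (p\<^sup>2)" and p: "0 < p"
    and Z: "\<And>k. Z k \<in> borel_measurable M" "\<And>k w. 0 \<le> Z k w"
    and Z2: "\<And>k. (\<integral>\<^sup>+ w. ennreal ((Z k w)\<^sup>2) \<partial>M) \<le> ennreal K" and K: "0 \<le> K"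
    and c: "\<And>k. 0 \<le> c k"
  shows "(\<integral>\<^sup>+ w. (\<Sum>k. ennreal (c k * Z k w)) * (\<integral>\<^sup>+ \<delta>. G w \<delta> * indicator {0..1} \<delta> \<partial>lborel) \<partial>M)
    \<le> (\<Sum>k. ennreal (c k)) * ennreal (p * (K + 1) / 2)"
proof -
  note [measurable] = G Z(1)
  have G_w: "(\<lambda>\<delta>. G w \<delta>) \<in> borel_measurable lborel" if "w \<in> space M" for w
    using measurable_Pair2[OF G that] by simp
  define A where "A = (\<Sum>k. ennreal (c k))"
  define S where "S w = (\<Sum>k. ennreal (c k) * ennreal (p / 2) * ennreal ((Z k w)\<^sup>2))" for w
  define Q where "Q w = (\<integral>\<^sup>+ \<delta>. (G w \<delta>)\<^sup>2 * indicator {0..1} \<delta> \<partial>lborel)" for w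
  have pointwise: "(\<Sum>k. ennreal (c k * Z k w)) * G w \<delta>
      \<le> S w + A * ennreal (1 / (2 * p)) * (G w \<delta>)\<^sup>2" for w \<delta>
    unfolding S_def A_def by (rule ennreal_weighted_sum_mult_le[OF c Z(2) p])
  have "(\<integral>\<^sup>+ w. (\<Sum>k. ennreal (c k * Z k w)) * (\<integral>\<^sup>+ \<delta>. G w \<delta> * indicator {0..1} \<delta> \<partial>lborel) \<partial>M)
      \<le> (\<integral>\<^sup>+ w. S w + A * ennreal (1 / (2 * p)) * Q w \<partial>M)"
  proof (rule nn_integral_mono)
    fix w assume "w \<in> space M"
    note G_w[OF this, measurable]
    have "(\<Sum>k. ennreal (c k * Z k w)) * (\<integral>\<^sup>+ \<delta>. G w \<delta> * indicator {0..1} \<delta> \<partial>lborel)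
        = (\<integral>\<^sup>+ \<delta>. (\<Sum>k. ennreal (c k * Z k w)) * G w \<delta> * indicator {0..1} \<delta> \<partial>lborel)"
      by (subst nn_integral_cmult[symmetric]) (auto simp: mult.assoc)
    also have "\<dots> \<le> (\<integral>\<^sup>+ \<delta>. S w * indicator {0..1} \<delta>
        + A * ennreal (1 / (2 * p)) * ((G w \<delta>)\<^sup>2 * indicator {0..1} \<delta>) \<partial>lborel)"
      using pointwise by (intro nn_integral_mono) (auto simp: indicator_def)
    also have "\<dots> = S w + A * ennreal (1 / (2 * p)) * Q w"
      unfolding Q_def by (subst nn_integral_add) (auto simp: nn_integral_cmult nn_integral_cmult_indicator)
    finally show "(\<Sum>k. ennreal (c k * Z k w)) * (\<integral>\<^sup>+ \<delta>. G w \<delta> * indicator {0..1} \<delta> \<partial>lborel)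
        \<le> S w + A * ennreal (1 / (2 * p)) * Q w" .
  qed
  also have "\<dots> = (\<integral>\<^sup>+ w. S w \<partial>M) + A * ennreal (1 / (2 * p)) * (\<integral>\<^sup>+ w. Q w \<partial>M)"
    unfolding S_def Q_def by (subst nn_integral_add) (auto simp: nn_integral_cmult)
  also have "(\<integral>\<^sup>+ w. S w \<partial>M) \<le> A * ennreal (p / 2) * ennreal K"
  proof -
    have "(\<integral>\<^sup>+ w. S w \<partial>M) = (\<Sum>k. ennreal (c k) * ennreal (p / 2) * (\<integral>\<^sup>+ w. ennreal ((Z k w)\<^sup>2) \<partial>M))"
      unfolding S_def by (subst nn_integral_suminf) (auto simp: nn_integral_cmult)
    also have "\<dots> \<le> (\<Sum>k. ennreal (c k) * ennreal (p / 2) * ennreal K)"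
      by (intro suminf_le mult_left_mono Z2) auto
    finally show ?thesis
      by (simp add: A_def)
  qed
  also have "(\<integral>\<^sup>+ w. Q w \<partial>M) \<le> ennreal (p\<^sup>2)"
    unfolding Q_def by (rule nn_integral_segment_integral_square_le[OF G G2])
  also have "A * ennreal (p / 2) * ennreal K + A * ennreal (1 / (2 * p)) * ennreal (p\<^sup>2)
      = A * ennreal (p / 2 * K + 1 / (2 * p) * p\<^sup>2)"
    using p K by (simp add: ennreal_mult'[symmetric] ennreal_plus[symmetric] distrib_left[symmetric]
        mult.assoc del: ennreal_plus)
  also have "p / 2 * K + 1 / (2 * p) * p\<^sup>2 = p * (K + 1) / 2"
    using p by (simp add: field_simps power2_eq_square)
  finally show ?thesis
    by (simp add: A_def mult_left_mono add_mono)
qed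

lemma (in prob_space) nn_integral_square_le_one_plus_moment:
  fixes Z :: "'a \<Rightarrow> real" and q :: real
  assumes Z: "Z \<in> borel_measurable M" and q: "2 \<le> q"
  shows "(\<integral>\<^sup>+ w. ennreal ((Z w)\<^sup>2) \<partial>M) \<le> 1 + (\<integral>\<^sup>+ w. ennreal (\<bar>Z w\<bar> powr q) \<partial>M)"
proof -
  have real_bound: "(Z w)\<^sup>2 \<le> 1 + \<bar>Z w\<bar> powr q" for w
  proof (cases "\<bar>Z w\<bar> \<le> 1")
    case True
    then have "(Z w)\<^sup>2 \<le> 1"
      using power_le_one[of "\<bar>Z w\<bar>" 2] by simp
    then show ?thesis
      using powr_ge_zero[of "\<bar>Z w\<bar>" q] by linarith
  next
    case False
    then have "\<bar>Z w\<bar> powr 2 \<le> \<bar>Z w\<bar> powr q"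
      using q by (intro powr_mono) auto
    then show ?thesis
      using False by (simp add: powr_numeral)
  qed
  have "(\<integral>\<^sup>+ w. ennreal ((Z w)\<^sup>2) \<partial>M) \<le> (\<integral>\<^sup>+ w. 1 + ennreal (\<bar>Z w\<bar> powr q) \<partial>M)"
    using ennreal_leI[OF real_bound] by (intro nn_integral_mono) simp
  also have "\<dots> = 1 + (\<integral>\<^sup>+ w. ennreal (\<bar>Z w\<bar> powr q) \<partial>M)"
    using Z by (subst nn_integral_add) (auto simp: emeasure_space_1)
  finally show ?thesis .
qed

lemma (in prob_space) nn_integral_le_one_plus_square:
  fixes Z :: "'a \<Rightarrow> real"
  assumes Z: "Z \<in> borel_measurable M"
  shows "(\<integral>\<^sup>+ w. ennreal (Z w) \<partial>M) \<le> 1 + (\<integral>\<^sup>+ w. ennreal ((Z w)\<^sup>2) \<partial>M)"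
proof -
  have real_bound: "Z w \<le> 1 + (Z w)\<^sup>2" for w
  proof (cases "Z w \<le> 1")
    case False
    then have "Z w * 1 \<le> Z w * Z w"
      by (intro mult_left_mono) auto
    then show ?thesis
      by (simp add: power2_eq_square)
  qed (use zero_le_power2[of "Z w"] in linarith)
  have "(\<integral>\<^sup>+ w. ennreal (Z w) \<partial>M) \<le> (\<integral>\<^sup>+ w. 1 + ennreal ((Z w)\<^sup>2) \<partial>M)"
    using ennreal_leI[OF real_bound] by (intro nn_integral_mono) simp
  also have "\<dots> = 1 + (\<integral>\<^sup>+ w. ennreal ((Z w)\<^sup>2) \<partial>M)"
    using Z by (subst nn_integral_add) (auto simp: emeasure_space_1)
  finally show ?thesis .
qed

lemma (in prob_space) AE_cesaro_mean_tendsto_0: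
  fixes B :: "nat \<Rightarrow> 'a \<Rightarrow> ennreal"
  assumes B: "\<And>t. B t \<in> borel_measurable M"
    and finite: "(\<Sum>t. (\<integral>\<^sup>+ w. B (Suc t) w \<partial>M) * ennreal (1 / real (Suc t))) \<noteq> \<top>"
  shows "AE w in M. (\<forall>t. B (Suc t) w \<noteq> \<top>) \<and> (\<lambda>n. (\<Sum>t=1..n. enn2real (B t w)) / real n) \<longlonglongrightarrow> 0"
proof -
  define S where "S w = (\<Sum>t. B (Suc t) w * ennreal (1 / real (Suc t)))" for w
  have "(\<integral>\<^sup>+ w. S w \<partial>M) = (\<Sum>t. (\<integral>\<^sup>+ w. B (Suc t) w \<partial>M) * ennreal (1 / real (Suc t)))"
    unfolding S_def using B by (subst nn_integral_suminf) (auto simp: nn_integral_multc)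
  moreover have "S \<in> borel_measurable M"
    unfolding S_def using B by measurable
  ultimately have "AE w in M. S w \<noteq> \<top>"
    using finite nn_integral_PInf_AE[of S] by simp
  then show ?thesis
  proof (rule eventually_mono)
    fix w assume "S w \<noteq> \<top>"
    then have B_finite: "B (Suc t) w \<noteq> \<top>" for t
      unfolding S_def by (auto dest!: ennreal_suminf_lessD[of _ \<top> t]
          simp: top.not_eq_extremum ennreal_mult_less_top)
    have "summable (\<lambda>t. enn2real (B (Suc t) w) / real (Suc t))"
    proof (rule summable_suminf_not_top)
      have "ennreal (enn2real (B (Suc t) w) / real (Suc t))
          = ennreal (enn2real (B (Suc t) w)) * ennreal (1 / real (Suc t))" for t
        by (subst ennreal_mult[symmetric]) auto
      then show "(\<Sum>t. ennreal (enn2real (B (Suc t) w) / real (Suc t))) \<noteq> \<top>"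
        using \<open>S w \<noteq> \<top>\<close> B_finite by (simp add: S_def ennreal_enn2real_if)
    qed simp
    then have "(\<lambda>n. (\<Sum>t=1..n. enn2real (B t w)) / real n) \<longlonglongrightarrow> 0"
      by (intro cesaro_mean_tendsto_0_of_summable_div) auto
    then show "(\<forall>t. B (Suc t) w \<noteq> \<top>) \<and> (\<lambda>n. (\<Sum>t=1..n. enn2real (B t w)) / real n) \<longlonglongrightarrow> 0"
      using B_finite by blast
  qed
qed

lemma supn_nonneg: "0 \<le> supn x"
  unfolding supn_def by (rule order_trans[OF abs_ge_zero Max_ge]) auto

lemma supn_zero: "supn 0 = 0"
  unfolding supn_def by (simp add: image_constant_conv)

lemma supn_uminus: "supn (- x) = supn x"
  unfolding supn_def by simp

lemma borel_measurable_supn[measurable]: "supn \<in> borel_measurable borel"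
proof -
  have [measurable]: "(\<lambda>x::real^'a. x $ i) \<in> borel_measurable borel" for i
    by (intro borel_measurable_continuous_onI linear_continuous_on bounded_linear_vec_nth)
  have "(\<lambda>x::real^'a. Max ((\<lambda>i. \<bar>x $ i\<bar>) ` UNIV)) \<in> borel_measurable borel"
    by (intro borel_measurable_Max) auto
  then show ?thesis
    unfolding supn_def[abs_def] by simp
qed

lemma borel_measurable_comp_sequences:
  fixes f :: "(nat \<Rightarrow> nat) \<Rightarrow> (nat \<Rightarrow> 'b::topological_space) \<Rightarrow> real"
    and y :: "nat \<Rightarrow> 'w \<Rightarrow> nat" and x :: "nat \<Rightarrow> 'w \<Rightarrow> 'b"
  assumes "\<And>k. y k \<in> M \<rightarrow>\<^sub>M count_space UNIV" "\<And>k. x k \<in> borel_measurable M"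
    and f: "(\<lambda>(y, x). f y x) \<in> borel_measurable (PiM UNIV (\<lambda>_. count_space UNIV) \<Otimes>\<^sub>M PiM UNIV (\<lambda>_. borel))"
  shows "(\<lambda>w. f (\<lambda>k. y k w) (\<lambda>k. x k w)) \<in> borel_measurable M"
proof -
  have "(\<lambda>w. (\<lambda>k. y k w, \<lambda>k. x k w))
      \<in> M \<rightarrow>\<^sub>M PiM UNIV (\<lambda>_. count_space UNIV) \<Otimes>\<^sub>M PiM UNIV (\<lambda>_. borel)"
    using assms(1,2) by (intro measurable_Pair measurable_PiM_single') auto
  from measurable_compose[OF this f] show ?thesis
    by simp
qed

lemma borel_measurable_segment_integral:
  fixes G :: "'a \<Rightarrow> real \<Rightarrow> ennreal"
  assumes "(\<lambda>(w, \<delta>). G w \<delta>) \<in> borel_measurable (N \<Otimes>\<^sub>M lborel)"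
  shows "(\<lambda>w. \<integral>\<^sup>+ \<delta>. G w \<delta> * indicator {0..1} \<delta> \<partial>lborel) \<in> borel_measurable N"
proof (rule lborel.borel_measurable_nn_integral)
  have indicator: "(\<lambda>x. indicator {0..1::real} (snd x) :: ennreal) \<in> borel_measurable (N \<Otimes>\<^sub>M lborel)"
    by (intro measurable_compose[OF measurable_snd borel_measurable_indicator]) simp
  have "(\<lambda>x. (\<lambda>(w, \<delta>). G w \<delta>) x * indicator {0..1} (snd x)) \<in> borel_measurable (N \<Otimes>\<^sub>M lborel)"
    by (intro borel_measurable_times_ennreal assms indicator)
  then show "(\<lambda>(w, \<delta>). G w \<delta> * indicator {0..1} \<delta>) \<in> borel_measurable (N \<Otimes>\<^sub>M lborel)"
    by (simp add: case_prod_beta')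
qed

locale dpd_estimation = prob_space M
  for M :: "'w measure"
    and Y :: "int \<Rightarrow> 'w \<Rightarrow> nat"
    and X :: "int \<Rightarrow> 'w \<Rightarrow> real ^ 'e"
    and f :: "'th::{metric_space, second_countable_topology} \<Rightarrow> (nat \<Rightarrow> nat) \<Rightarrow> (nat \<Rightarrow> real ^ 'e) \<Rightarrow> real"
    and Theta :: "'th set"
    and theta0 :: 'th
    and g g' :: "nat \<Rightarrow> real \<Rightarrow> real"
    and eta :: "real \<Rightarrow> real"
    and a eps C cbar c_eta gam :: real
    and alpha0 phibar psibar :: "nat \<Rightarrow> real" +
  assumes a_pos: "0 < a"
    and theta0: "theta0 \<in> Theta"
    and Y_meas[measurable]: "\<And>t. Y t \<in> M \<rightarrow>\<^sub>M count_space UNIV"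
    and X_meas[measurable]: "\<And>t. X t \<in> borel_measurable M"
    and f_meas: "\<And>th. th \<in> Theta \<Longrightarrow> (\<lambda>(y, x). f th y x) \<in> borel_measurable
                   (PiM UNIV (\<lambda>_. count_space UNIV) \<Otimes>\<^sub>M PiM UNIV (\<lambda>_. borel))"
    and g_nonneg: "\<And>y e. 0 \<le> g y e" and g_sums: "\<And>e. (\<lambda>y. g y e) sums 1"
    and g_deriv: "\<And>y e. (g y has_real_derivative g' y e) (at e)"
    and g'_cont: "\<And>y. continuous_on UNIV (g' y)"
    and g'_summable: "\<And>e. summable (\<lambda>y. \<bar>g' y e\<bar>)"
    and eps: "1 \<le> eps"
    and moment: "0 < C" "\<And>t. (\<integral>\<^sup>+ w. ennreal (max (real (Y t w)) (max \<bar>lam f Y X t theta0 w\<bar> (supn (X t w)))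
                      powr (1 + eps)) \<partial>M) < ennreal C"
    and f_cont: "\<And>y x. continuous_on Theta (\<lambda>th. f th y x)"
    and alpha0_nonneg: "\<And>k. 0 \<le> alpha0 k"
    and f_lip: "\<And>y x y' x'. summable (\<lambda>k. alpha0 k * (\<bar>real (y k) - real (y' k)\<bar> + supn (x k - x' k))) \<Longrightarrow>
                 \<forall>th \<in> Theta. \<bar>f th y x - f th y' x'\<bar>
                    \<le> (\<Sum>k. alpha0 k * (\<bar>real (y k) - real (y' k)\<bar> + supn (x k - x' k)))"
    and f_lower: "\<And>th y x. th \<in> Theta \<Longrightarrow> cbar \<le> f th y x"
    and eta_lip: "0 < c_eta" "\<And>u v. cbar \<le> u \<Longrightarrow> cbar \<le> v \<Longrightarrow> \<bar>eta u - eta v\<bar> \<le> c_eta * \<bar>u - v\<bar>"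
    and gam: "1 < gam"
    and alpha0_decay: "alpha0 \<in> O(\<lambda>k. real (Suc k) powr (- gam))"
    and phibar: "\<And>t::nat. t \<ge> 1 \<Longrightarrow> phibar t > 0 \<and> (\<forall>\<delta> \<in> {0..1::real}.
               (\<integral>\<^sup>+ w. (SUP th \<in> Theta. ennreal (phi_fun g
                   (\<delta> * eta (lam f Y X (int t) th w) + (1 - \<delta>) * eta (lamhat f Y X (int t) th w)))) ^ 2 \<partial>M)
               \<le> ennreal ((phibar t)\<^sup>2))"
    and psibar: "\<And>t::nat. t \<ge> 1 \<Longrightarrow> psibar t > 0 \<and> (\<forall>\<delta> \<in> {0..1::real}.
               (\<integral>\<^sup>+ w. (SUP th \<in> Theta. ennreal (psi_fun g (Y (int t) w)
                   (\<delta> * eta (lam f Y X (int t) th w) + (1 - \<delta>) * eta (lamhat f Y X (int t) th w)))) ^ 2 \<partial>M)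
               \<le> ennreal ((psibar t)\<^sup>2))"
    and sum_cond: "summable (\<lambda>k. real (Suc k) powr (- gam) * max (phibar (Suc k)) (psibar (Suc k)))"
begin

abbreviation eta_lam :: "int \<Rightarrow> 'th \<Rightarrow> 'w \<Rightarrow> real" where
  "eta_lam t th w \<equiv> eta (lam f Y X t th w)"

abbreviation eta_lamhat :: "int \<Rightarrow> 'th \<Rightarrow> 'w \<Rightarrow> real" where
  "eta_lamhat t th w \<equiv> eta (lamhat f Y X t th w)"

lemma lam_ge: "th \<in> Theta \<Longrightarrow> cbar \<le> lam f Y X t th w"
  and lamhat_ge: "th \<in> Theta \<Longrightarrow> cbar \<le> lamhat f Y X t th w"
  unfolding lam_def lamhat_def by (simp_all add: f_lower)

lemma continuous_on_eta_max: "continuous_on UNIV (\<lambda>x. eta (max x cbar))"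
proof -
  have "c_eta-lipschitz_on UNIV (\<lambda>x. eta (max x cbar))"
  proof (rule lipschitz_onI)
    fix x y :: real
    have "\<bar>eta (max x cbar) - eta (max y cbar)\<bar> \<le> c_eta * \<bar>max x cbar - max y cbar\<bar>"
      by (rule eta_lip(2)) auto
    also have "\<dots> \<le> c_eta * \<bar>x - y\<bar>"
      using eta_lip(1) by (intro mult_left_mono) (auto simp: max_def)
    finally show "dist (eta (max x cbar)) (eta (max y cbar)) \<le> c_eta * dist x y"
      by (simp add: dist_real_def)
  qed (use eta_lip(1) in simp)
  then show ?thesis
    by (rule lipschitz_on_continuous_on)
qed

lemma continuous_on_eta_lam: "continuous_on Theta (\<lambda>th. eta_lam t th w)"
proof -
  have "continuous_on Theta (\<lambda>th. eta (max (lam f Y X t th w) cbar))"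
    unfolding lam_def by (rule continuous_on_compose2[OF continuous_on_eta_max f_cont]) auto
  then show ?thesis
    by (rule continuous_on_eq) (simp add: lam_ge max_absorb1)
qed

lemma continuous_on_eta_lamhat: "continuous_on Theta (\<lambda>th. eta_lamhat t th w)"
proof -
  have "continuous_on Theta (\<lambda>th. eta (max (lamhat f Y X t th w) cbar))"
    unfolding lamhat_def by (rule continuous_on_compose2[OF continuous_on_eta_max f_cont]) auto
  then show ?thesis
    by (rule continuous_on_eq) (simp add: lamhat_ge max_absorb1)
qed

lemma
  assumes th: "th \<in> Theta"
  shows borel_measurable_lam: "(\<lambda>w. lam f Y X t th w) \<in> borel_measurable M"
    and borel_measurable_lamhat: "(\<lambda>w. lamhat f Y X t th w) \<in> borel_measurable M"
proof -
  have "(\<lambda>w. if int k < t - 1 then Y (t - 1 - int k) w else 0) \<in> M \<rightarrow>\<^sub>M count_space UNIV"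
    and "(\<lambda>w. if int k < t - 1 then X (t - 1 - int k) w else 0) \<in> borel_measurable M" for k
    by (cases "int k < t - 1"; simp)+
  then show "(\<lambda>w. lamhat f Y X t th w) \<in> borel_measurable M"
    unfolding lamhat_def by (rule borel_measurable_comp_sequences[OF _ _ f_meas[OF th]])
  show "(\<lambda>w. lam f Y X t th w) \<in> borel_measurable M"
    unfolding lam_def by (rule borel_measurable_comp_sequences[OF _ _ f_meas[OF th]]) simp_all
qed

lemma
  assumes th: "th \<in> Theta"
  shows borel_measurable_eta_lam: "(\<lambda>w. eta_lam t th w) \<in> borel_measurable M"
    and borel_measurable_eta_lamhat: "(\<lambda>w. eta_lamhat t th w) \<in> borel_measurable M"
proof -
  note eta_max_meas = borel_measurable_continuous_onI[OF continuous_on_eta_max]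
  from measurable_compose[OF borel_measurable_lam[OF th] eta_max_meas]
  show "(\<lambda>w. eta_lam t th w) \<in> borel_measurable M"
    using th by (simp add: lam_ge max_absorb1)
  from measurable_compose[OF borel_measurable_lamhat[OF th] eta_max_meas]
  show "(\<lambda>w. eta_lamhat t th w) \<in> borel_measurable M"
    using th by (simp add: lamhat_ge max_absorb1)
qed

lemma deriv_g: "deriv (g y) = g' y"
  using g_deriv by (intro ext DERIV_imp_deriv) auto

lemma continuous_on_g: "continuous_on UNIV (g y)"
  using g_deriv by (intro continuous_at_imp_continuous_on ballI DERIV_isCont) auto

lemma borel_measurable_g[measurable]: "g y \<in> borel_measurable borel"
  and borel_measurable_g'[measurable]: "g' y \<in> borel_measurable borel"
  using continuous_on_g g'_cont by (auto intro: borel_measurable_continuous_onI)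

lemma borel_measurable_phi_fun[measurable]: "phi_fun g \<in> borel_measurable borel"
  unfolding phi_fun_def[abs_def] deriv_g by measurable

lemma borel_measurable_psi_fun[measurable]: "psi_fun g y \<in> borel_measurable borel"
  unfolding psi_fun_def[abs_def] deriv_g by measurable

text \<open>The lag-\<open>(k + 1)\<close> term of the Lipschitz bound in \<open>A\<^sub>0(\<Theta>)\<close>, comparing the zero-padded
  with the full past at time \<open>t\<close>.\<close>

definition trunc_gap :: "nat \<Rightarrow> nat \<Rightarrow> 'w \<Rightarrow> real" where
  "trunc_gap t k w = (if int k < int t - 1 then 0
     else real (Y (int t - 1 - int k) w) + supn (X (int t - 1 - int k) w))"

definition trunc_bound :: "nat \<Rightarrow> 'w \<Rightarrow> ennreal" where
  "trunc_bound t w = (\<Sum>k. ennreal (alpha0 k * trunc_gap t k w))"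

definition eta_seg :: "nat \<Rightarrow> 'th \<Rightarrow> 'w \<Rightarrow> real \<Rightarrow> real" where
  "eta_seg t th w \<delta> = \<delta> * eta_lam (int t) th w + (1 - \<delta>) * eta_lamhat (int t) th w"

definition sup_phi :: "nat \<Rightarrow> 'w \<Rightarrow> real \<Rightarrow> ennreal" where
  "sup_phi t w \<delta> = (SUP th\<in>Theta. ennreal (phi_fun g (eta_seg t th w \<delta>)))"

definition sup_psi :: "nat \<Rightarrow> 'w \<Rightarrow> real \<Rightarrow> ennreal" where
  "sup_psi t w \<delta> = (SUP th\<in>Theta. ennreal (psi_fun g (Y (int t) w) (eta_seg t th w \<delta>)))"

definition err_bound :: "nat \<Rightarrow> 'w \<Rightarrow> ennreal" where
  "err_bound t w = ennreal ((1 + a) * 2 powr a * c_eta) * trunc_bound t w *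
     ((\<integral>\<^sup>+ \<delta>. sup_phi t w \<delta> * indicator {0..1} \<delta> \<partial>lborel) + (\<integral>\<^sup>+ \<delta>. sup_psi t w \<delta> * indicator {0..1} \<delta> \<partial>lborel))"

lemma trunc_gap_nonneg: "0 \<le> trunc_gap t k w"
  by (simp add: trunc_gap_def supn_nonneg)

lemma borel_measurable_trunc_gap[measurable]: "trunc_gap t k \<in> borel_measurable M"
  unfolding trunc_gap_def by (cases "int k < int t - 1") simp_all

lemma borel_measurable_trunc_bound[measurable]: "trunc_bound t \<in> borel_measurable M"
  unfolding trunc_bound_def by measurable

lemma abs_lamhat_minus_lam_le:
  assumes th: "th \<in> Theta" and summable: "summable (\<lambda>k. alpha0 k * trunc_gap t k w)"
  shows "\<bar>lamhat f Y X (int t) th w - lam f Y X (int t) th w\<bar> \<le> (\<Sum>k. alpha0 k * trunc_gap t k w)"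
proof -
  define y where "y k = Y (int t - 1 - int k) w" for k
  define x where "x k = X (int t - 1 - int k) w" for k
  define yhat where "yhat k = (if int k < int t - 1 then y k else 0)" for k
  define xhat where "xhat k = (if int k < int t - 1 then x k else 0)" for k
  have "(\<lambda>k. alpha0 k * (\<bar>real (yhat k) - real (y k)\<bar> + supn (xhat k - x k)))
      = (\<lambda>k. alpha0 k * trunc_gap t k w)"
    by (auto simp: trunc_gap_def yhat_def xhat_def y_def x_def supn_zero supn_uminus)
  then show ?thesis
    using f_lip[of yhat y xhat x] summable th
    unfolding lam_def lamhat_def y_def x_def yhat_def xhat_def by simp
qed

lemma abs_dpd_diff_le_err_bound:
  assumes th: "th \<in> Theta" and finite: "trunc_bound t w \<noteq> \<top>"
  shows "ennreal \<bar>dpd g a (Y (int t) w) (eta_lamhat (int t) th w) - dpd g a (Y (int t) w) (eta_lam (int t) th w)\<bar>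
    \<le> err_bound t w"
proof -
  define Z where "Z = (\<Sum>k. alpha0 k * trunc_gap t k w)"
  have summable: "summable (\<lambda>k. alpha0 k * trunc_gap t k w)"
    using finite unfolding trunc_bound_def
    by (intro summable_suminf_not_top) (auto simp: alpha0_nonneg trunc_gap_nonneg)
  then have Z: "trunc_bound t w = ennreal Z" "0 \<le> Z"
    unfolding trunc_bound_def Z_def
    by (auto intro!: suminf_ennreal2 suminf_nonneg simp: alpha0_nonneg trunc_gap_nonneg)
  have "\<bar>eta_lam (int t) th w - eta_lamhat (int t) th w\<bar>
      \<le> c_eta * \<bar>lam f Y X (int t) th w - lamhat f Y X (int t) th w\<bar>"
    using th by (intro eta_lip(2) lam_ge lamhat_ge)
  also have "\<dots> \<le> c_eta * Z"
    using abs_lamhat_minus_lam_le[OF th summable] eta_lip(1)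
    by (intro mult_left_mono) (auto simp: Z_def abs_minus_commute)
  finally have eta_diff: "\<bar>eta_lam (int t) th w - eta_lamhat (int t) th w\<bar> \<le> c_eta * Z" .
  have "ennreal \<bar>dpd g a (Y (int t) w) (eta_lamhat (int t) th w) - dpd g a (Y (int t) w) (eta_lam (int t) th w)\<bar>
      \<le> ennreal ((1 + a) * 2 powr a * \<bar>eta_lam (int t) th w - eta_lamhat (int t) th w\<bar>) *
        ((\<integral>\<^sup>+ \<delta>. ennreal (phi_fun g (eta_seg t th w \<delta>)) * indicator {0..1} \<delta> \<partial>lborel) +
         (\<integral>\<^sup>+ \<delta>. ennreal (psi_fun g (Y (int t) w) (eta_seg t th w \<delta>)) * indicator {0..1} \<delta> \<partial>lborel))"
    unfolding eta_seg_def
    by (rule abs_dpd_diff_le[OF g_nonneg g_sums g_deriv g'_cont g'_summable a_pos])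
  also have "\<dots> \<le> ennreal ((1 + a) * 2 powr a * (c_eta * Z)) *
        ((\<integral>\<^sup>+ \<delta>. sup_phi t w \<delta> * indicator {0..1} \<delta> \<partial>lborel) +
         (\<integral>\<^sup>+ \<delta>. sup_psi t w \<delta> * indicator {0..1} \<delta> \<partial>lborel))"
  proof (intro mult_mono add_mono)
    show "ennreal ((1 + a) * 2 powr a * \<bar>eta_lam (int t) th w - eta_lamhat (int t) th w\<bar>)
        \<le> ennreal ((1 + a) * 2 powr a * (c_eta * Z))"
      using eta_diff a_pos by (intro ennreal_leI mult_left_mono) auto
  qed (unfold sup_phi_def sup_psi_def, (intro nn_integral_mono mult_right_mono SUP_upper th; simp)+, simp_all)
  also have "\<dots> = err_bound t w"
    unfolding err_bound_def Z using Z(2) eta_lip(1) a_pos by (simp add: ennreal_mult mult.assoc)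
  finally show ?thesis .
qed


lemma continuous_on_eta_seg: "continuous_on Theta (\<lambda>th. eta_seg t th w \<delta>)"
  unfolding eta_seg_def by (intro continuous_intros continuous_on_eta_lam continuous_on_eta_lamhat)

lemma borel_measurable_eta_seg:
  assumes "th \<in> Theta"
  shows "(\<lambda>x. eta_seg t th (fst x) (snd x)) \<in> borel_measurable (M \<Otimes>\<^sub>M lborel)"
proof -
  note [measurable] = borel_measurable_eta_lam[OF assms] borel_measurable_eta_lamhat[OF assms]
  show ?thesis
    unfolding eta_seg_def by measurable
qed

lemma borel_measurable_sup_phi: "(\<lambda>(w, \<delta>). sup_phi t w \<delta>) \<in> borel_measurable (M \<Otimes>\<^sub>M lborel)"
proof -
  have "(\<lambda>x. SUP th\<in>Theta. ennreal (phi_fun g (eta_seg t th (fst x) (snd x)))) \<in> borel_measurable (M \<Otimes>\<^sub>M lborel)"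
  proof (rule borel_measurable_SUP_of_SUP_continuous
      [where h="\<lambda>i th x. \<Sum>y<i. \<bar>g' y (eta_seg t th (fst x) (snd x))\<bar>"])
    show "(\<lambda>x. ennreal (phi_fun g (eta_seg t th (fst x) (snd x)))) \<in> borel_measurable (M \<Otimes>\<^sub>M lborel)"
      if "th \<in> Theta" for th
      using measurable_compose[OF borel_measurable_eta_seg[OF that] borel_measurable_phi_fun] by simp
    show "ennreal (phi_fun g (eta_seg t th (fst x) (snd x)))
        = (SUP i. ennreal (\<Sum>y<i. \<bar>g' y (eta_seg t th (fst x) (snd x))\<bar>))" for th x
      unfolding phi_fun_def deriv_g by (rule ennreal_suminf_abs_eq_SUP[OF g'_summable])
    show "continuous_on Theta (\<lambda>th. \<Sum>y<i. \<bar>g' y (eta_seg t th (fst x) (snd x))\<bar>)" for i x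
      by (intro continuous_on_sum continuous_on_rabs continuous_on_compose2[OF g'_cont continuous_on_eta_seg])
        auto
  qed
  then show ?thesis
    by (simp add: sup_phi_def case_prod_beta')
qed

lemma borel_measurable_sup_psi: "(\<lambda>(w, \<delta>). sup_psi t w \<delta>) \<in> borel_measurable (M \<Otimes>\<^sub>M lborel)"
proof -
  have "(\<lambda>x. SUP th\<in>Theta. ennreal (psi_fun g (Y (int t) (fst x)) (eta_seg t th (fst x) (snd x))))
      \<in> borel_measurable (M \<Otimes>\<^sub>M lborel)"
  proof (rule borel_measurable_SUP_of_SUP_continuous[where h="\<lambda>i th x.
      \<bar>g' (Y (int t) (fst x)) (eta_seg t th (fst x) (snd x))\<bar>
        / (g (Y (int t) (fst x)) (eta_seg t th (fst x) (snd x)) + inverse (real (Suc i)))"])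
    show "(\<lambda>x. ennreal (psi_fun g (Y (int t) (fst x)) (eta_seg t th (fst x) (snd x))))
        \<in> borel_measurable (M \<Otimes>\<^sub>M lborel)" if "th \<in> Theta" for th
    proof (rule measurable_compose_countable'[where I=UNIV and g="\<lambda>x. Y (int t) (fst x)"])
      show "(\<lambda>x. ennreal (psi_fun g y (eta_seg t th (fst x) (snd x)))) \<in> borel_measurable (M \<Otimes>\<^sub>M lborel)"
        for y
        using measurable_compose[OF borel_measurable_eta_seg[OF that] borel_measurable_psi_fun] by simp
    qed simp_all
    show "ennreal (psi_fun g (Y (int t) (fst x)) (eta_seg t th (fst x) (snd x))) = (SUP i. ennreal
        (\<bar>g' (Y (int t) (fst x)) (eta_seg t th (fst x) (snd x))\<bar>
          / (g (Y (int t) (fst x)) (eta_seg t th (fst x) (snd x)) + inverse (real (Suc i)))))" for th x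
      unfolding psi_fun_def deriv_g by (rule ennreal_abs_log_deriv_eq_SUP[OF g_nonneg g_deriv])
    have "g y e + inverse (real (Suc i)) \<noteq> 0" for y e i
      using g_nonneg[of y e] by (metis add_nonneg_pos inverse_positive_iff_positive of_nat_0_less_iff
          zero_less_Suc less_irrefl)
    then show "continuous_on Theta (\<lambda>th. \<bar>g' (Y (int t) (fst x)) (eta_seg t th (fst x) (snd x))\<bar>
        / (g (Y (int t) (fst x)) (eta_seg t th (fst x) (snd x)) + inverse (real (Suc i))))" for i x
      by (intro continuous_on_divide continuous_on_add continuous_on_const continuous_on_rabs
          continuous_on_compose2[OF g'_cont continuous_on_eta_seg]
          continuous_on_compose2[OF continuous_on_g continuous_on_eta_seg]) auto
  qed
  then show ?thesis
    by (simp add: sup_psi_def case_prod_beta')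
qed

lemma borel_measurable_err_bound[measurable]: "err_bound t \<in> borel_measurable M"
  using borel_measurable_segment_integral[OF borel_measurable_sup_phi]
    borel_measurable_segment_integral[OF borel_measurable_sup_psi]
  unfolding err_bound_def by measurable


lemma nn_integral_trunc_gap_square_le:
  "(\<integral>\<^sup>+ w. ennreal ((trunc_gap t k w)\<^sup>2) \<partial>M) \<le> ennreal (4 * (1 + C))"
proof (cases "int k < int t - 1")
  case True
  then show ?thesis
    by (simp add: trunc_gap_def)
next
  case False
  define s where "s = int t - 1 - int k"
  define m where "m w = max (real (Y s w)) (max \<bar>lam f Y X s theta0 w\<bar> (supn (X s w)))" for w
  have [measurable]: "m \<in> borel_measurable M"
    unfolding m_def using borel_measurable_lam[OF theta0] by measurable
  have "(\<integral>\<^sup>+ w. ennreal ((trunc_gap t k w)\<^sup>2) \<partial>M) \<le> (\<integral>\<^sup>+ w. ennreal 4 * ennreal ((m w)\<^sup>2) \<partial>M)"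
  proof (rule nn_integral_mono)
    fix w
    have "(trunc_gap t k w)\<^sup>2 \<le> (2 * m w)\<^sup>2"
      using False supn_nonneg[of "X s w"] by (intro power_mono) (auto simp: trunc_gap_def m_def s_def)
    then have "ennreal ((trunc_gap t k w)\<^sup>2) \<le> ennreal (4 * (m w)\<^sup>2)"
      by (intro ennreal_leI) (simp add: power_mult_distrib)
    then show "ennreal ((trunc_gap t k w)\<^sup>2) \<le> ennreal 4 * ennreal ((m w)\<^sup>2)"
      by (simp add: ennreal_mult)
  qed
  also have "\<dots> = ennreal 4 * (\<integral>\<^sup>+ w. ennreal ((m w)\<^sup>2) \<partial>M)"
    by (rule nn_integral_cmult) measurable
  also have "(\<integral>\<^sup>+ w. ennreal ((m w)\<^sup>2) \<partial>M) \<le> 1 + (\<integral>\<^sup>+ w. ennreal (\<bar>m w\<bar> powr (1 + eps)) \<partial>M)"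
    using eps by (intro nn_integral_square_le_one_plus_moment) auto
  also have "(\<integral>\<^sup>+ w. ennreal (\<bar>m w\<bar> powr (1 + eps)) \<partial>M) \<le> ennreal C"
    using moment(2)[of s] by (simp add: m_def)
  also have "ennreal 4 * (1 + ennreal C) = ennreal (4 * (1 + C))"
    using moment(1) by (simp add: ennreal_mult)
  finally show ?thesis
    by (simp add: mult_left_mono add_left_mono)
qed

lemma nn_integral_trunc_gap_le: "(\<integral>\<^sup>+ w. ennreal (trunc_gap t k w) \<partial>M) \<le> ennreal (1 + 4 * (1 + C))"
proof -
  have "(\<integral>\<^sup>+ w. ennreal (trunc_gap t k w) \<partial>M) \<le> 1 + ennreal (4 * (1 + C))"
    using nn_integral_le_one_plus_square[of "trunc_gap t k"] nn_integral_trunc_gap_square_le[of t k]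
    by (meson add_left_mono order_trans borel_measurable_trunc_gap)
  also have "1 + ennreal (4 * (1 + C)) = ennreal (1 + 4 * (1 + C))"
    using moment(1) by (subst ennreal_plus) auto
  finally show ?thesis .
qed

lemma summable_alpha0: "summable alpha0"
  using tail_suminf_le_powr[OF alpha0_nonneg gam alpha0_decay] by blast

lemma AE_trunc_bound_finite: "AE w in M. \<forall>t. trunc_bound t w \<noteq> \<top>"
proof -
  have "(\<integral>\<^sup>+ w. trunc_bound t w \<partial>M) \<noteq> \<top>" for t
  proof -
    have "(\<integral>\<^sup>+ w. trunc_bound t w \<partial>M) = (\<Sum>k. ennreal (alpha0 k) * (\<integral>\<^sup>+ w. ennreal (trunc_gap t k w) \<partial>M))"
      unfolding trunc_bound_def
      by (subst nn_integral_suminf) (auto simp: ennreal_mult alpha0_nonneg trunc_gap_nonneg nn_integral_cmult)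
    also have "\<dots> \<le> (\<Sum>k. ennreal (alpha0 k) * ennreal (1 + 4 * (1 + C)))"
      by (intro suminf_le mult_left_mono nn_integral_trunc_gap_le) auto
    also have "\<dots> = ennreal (\<Sum>k. alpha0 k) * ennreal (1 + 4 * (1 + C))"
      using summable_alpha0 alpha0_nonneg by (simp add: suminf_ennreal2)
    finally show ?thesis
      by (auto simp: top_unique ennreal_mult_eq_top_iff)
  qed
  then have "AE w in M. trunc_bound t w \<noteq> \<top>" for t
    using nn_integral_PInf_AE[of "trunc_bound t"] by simp
  then show ?thesis
    by (simp add: AE_all_countable)
qed


lemma nn_integral_trunc_bound_mult_segment_integral_le:
  fixes G :: "'w \<Rightarrow> real \<Rightarrow> ennreal"
  assumes tail: "\<And>m. (\<Sum>k. alpha0 (k + m)) \<le> K * real (Suc m) powr (1 - gam)" and t: "1 \<le> t"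
    and G: "(\<lambda>(w, \<delta>). G w \<delta>) \<in> borel_measurable (M \<Otimes>\<^sub>M lborel)"
    and G2: "\<And>\<delta>. \<delta> \<in> {0..1} \<Longrightarrow> (\<integral>\<^sup>+ w. (G w \<delta>)\<^sup>2 \<partial>M) \<le> ennreal (p\<^sup>2)" and p: "0 < p"
  shows "(\<integral>\<^sup>+ w. trunc_bound t w * (\<integral>\<^sup>+ \<delta>. G w \<delta> * indicator {0..1} \<delta> \<partial>lborel) \<partial>M)
    \<le> ennreal (K * real t powr (1 - gam) * (p * (4 * (1 + C) + 1) / 2))"
proof -
  have "0 \<le> K"
    using tail[of 0] suminf_nonneg[OF summable_alpha0 alpha0_nonneg] by simp
  define c where "c k = (if t - 1 \<le> k then alpha0 k else 0)" for k
  have c_nonneg: "0 \<le> c k" for k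
    by (simp add: c_def alpha0_nonneg)
  have "trunc_bound t w = (\<Sum>k. ennreal (c k * trunc_gap t k w))" for w
    unfolding trunc_bound_def c_def using t by (intro suminf_cong) (auto simp: trunc_gap_def)
  then have "(\<integral>\<^sup>+ w. trunc_bound t w * (\<integral>\<^sup>+ \<delta>. G w \<delta> * indicator {0..1} \<delta> \<partial>lborel) \<partial>M)
      \<le> (\<Sum>k. ennreal (c k)) * ennreal (p * (4 * (1 + C) + 1) / 2)"
    using moment(1) by (simp only:)
      (intro nn_integral_weighted_sum_mult_segment_integral_le[OF G G2 p] c_nonneg
        trunc_gap_nonneg nn_integral_trunc_gap_square_le, auto)
  also have "(\<Sum>k. ennreal (c k)) \<le> ennreal (K * real t powr (1 - gam))"
  proof -
    have "summable c"
      using c_nonneg by (intro summable_comparison_test'[OF summable_alpha0]) (auto simp: c_def)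
    then have "(\<Sum>k. c k) = (\<Sum>k. c (k + (t - 1)))"
      by (subst suminf_split_initial_segment[of _ "t - 1"]) (auto simp: c_def)
    also have "\<dots> = (\<Sum>k. alpha0 (k + (t - 1)))"
      unfolding c_def by simp
    also have "\<dots> \<le> K * real (Suc (t - 1)) powr (1 - gam)"
      by (rule tail)
    also have "Suc (t - 1) = t"
      using t by simp
    finally show ?thesis
      using \<open>summable c\<close> c_nonneg by (simp add: suminf_ennreal2 ennreal_leI)
  qed
  finally have "(\<integral>\<^sup>+ w. trunc_bound t w * (\<integral>\<^sup>+ \<delta>. G w \<delta> * indicator {0..1} \<delta> \<partial>lborel) \<partial>M)
      \<le> ennreal (K * real t powr (1 - gam)) * ennreal (p * (4 * (1 + C) + 1) / 2)"
    by (simp add: mult_right_mono)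
  also have "\<dots> = ennreal (K * real t powr (1 - gam) * (p * (4 * (1 + C) + 1) / 2))"
    using \<open>0 \<le> K\<close> p moment(1) by (intro ennreal_mult[symmetric]) auto
  finally show ?thesis .
qed


lemma nn_integral_err_bound_le:
  assumes tail: "\<And>m. (\<Sum>k. alpha0 (k + m)) \<le> K * real (Suc m) powr (1 - gam)" and t: "1 \<le> t"
  shows "(\<integral>\<^sup>+ w. err_bound t w \<partial>M) \<le> ennreal ((1 + a) * 2 powr a * c_eta * K * (4 * (1 + C) + 1)
    * (real t powr (1 - gam) * max (phibar t) (psibar t)))"
proof -
  have K: "0 \<le> K"
    using tail[of 0] suminf_nonneg[OF summable_alpha0 alpha0_nonneg] by simp
  define K0 where "K0 = (1 + a) * 2 powr a * c_eta"
  define Kt where "Kt = K * real t powr (1 - gam)"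
  define Km where "Km = 4 * (1 + C) + 1"
  have pos: "0 < K0" "0 \<le> Kt" "0 < Km" "0 < phibar t" "0 < psibar t"
    using a_pos eta_lip(1) K moment(1) phibar[OF t] psibar[OF t] by (auto simp: K0_def Kt_def Km_def)
  note [measurable] = borel_measurable_segment_integral[OF borel_measurable_sup_phi]
    borel_measurable_segment_integral[OF borel_measurable_sup_psi]
  have "(\<integral>\<^sup>+ w. err_bound t w \<partial>M) = ennreal K0 *
      ((\<integral>\<^sup>+ w. trunc_bound t w * (\<integral>\<^sup>+ \<delta>. sup_phi t w \<delta> * indicator {0..1} \<delta> \<partial>lborel) \<partial>M) +
       (\<integral>\<^sup>+ w. trunc_bound t w * (\<integral>\<^sup>+ \<delta>. sup_psi t w \<delta> * indicator {0..1} \<delta> \<partial>lborel) \<partial>M))"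
    unfolding err_bound_def K0_def
    by (simp add: nn_integral_cmult nn_integral_add distrib_left mult.assoc)
  also have "\<dots> \<le> ennreal K0 * (ennreal (Kt * (phibar t * Km / 2)) + ennreal (Kt * (psibar t * Km / 2)))"
    unfolding Kt_def Km_def using phibar[OF t] psibar[OF t]
    by (intro mult_left_mono add_mono nn_integral_trunc_bound_mult_segment_integral_le[OF tail t]
        borel_measurable_sup_phi borel_measurable_sup_psi) (auto simp: sup_phi_def sup_psi_def eta_seg_def)
  also have "\<dots> = ennreal (K0 * (Kt * (phibar t * Km / 2) + Kt * (psibar t * Km / 2)))"
    using pos by (simp add: ennreal_mult)
  also have "K0 * (Kt * (phibar t * Km / 2) + Kt * (psibar t * Km / 2))
      = K0 * Kt * Km * ((phibar t + psibar t) / 2)"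
    by (simp add: algebra_simps)
  also have "\<dots> \<le> K0 * Kt * Km * max (phibar t) (psibar t)"
    using pos by (intro mult_left_mono) auto
  also have "\<dots> = (1 + a) * 2 powr a * c_eta * K * (4 * (1 + C) + 1)
      * (real t powr (1 - gam) * max (phibar t) (psibar t))"
    by (simp only: K0_def Kt_def Km_def mult_ac)
  finally show ?thesis
    by (simp add: ennreal_leI)
qed

lemma err_bound_weighted_sum_finite:
  "(\<Sum>t. (\<integral>\<^sup>+ w. err_bound (Suc t) w \<partial>M) * ennreal (1 / real (Suc t))) \<noteq> \<top>"
proof -
  obtain K where K: "0 < K" "\<And>m. (\<Sum>k. alpha0 (k + m)) \<le> K * real (Suc m) powr (1 - gam)"
    using tail_suminf_le_powr[OF alpha0_nonneg gam alpha0_decay] by blast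
  define K' where "K' = (1 + a) * 2 powr a * c_eta * K * (4 * (1 + C) + 1)"
  define b where "b t = real (Suc t) powr (- gam) * max (phibar (Suc t)) (psibar (Suc t))" for t
  have "0 \<le> K'"
    using a_pos eta_lip(1) K(1) moment(1) by (simp add: K'_def)
  have "(\<integral>\<^sup>+ w. err_bound (Suc t) w \<partial>M) * ennreal (1 / real (Suc t)) \<le> ennreal (K' * b t)" for t
  proof -
    have "(\<integral>\<^sup>+ w. err_bound (Suc t) w \<partial>M) * ennreal (1 / real (Suc t))
        \<le> ennreal (K' * (real (Suc t) powr (1 - gam) * max (phibar (Suc t)) (psibar (Suc t))))
          * ennreal (1 / real (Suc t))"
      using nn_integral_err_bound_le[OF K(2), of "Suc t"]
      by (intro mult_right_mono) (auto simp: K'_def mult.assoc)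
    also have "\<dots> = ennreal (K' * (real (Suc t) powr (1 - gam) * max (phibar (Suc t)) (psibar (Suc t)))
        * (1 / real (Suc t)))"
      using \<open>0 \<le> K'\<close> phibar[of "Suc t"] by (intro ennreal_mult[symmetric]) auto
    also have "K' * (real (Suc t) powr (1 - gam) * max (phibar (Suc t)) (psibar (Suc t))) * (1 / real (Suc t))
        = K' * (real (Suc t) powr (1 - gam) * (1 / real (Suc t)) * max (phibar (Suc t)) (psibar (Suc t)))"
      by (simp only: mult_ac)
    also have "real (Suc t) powr (1 - gam) * (1 / real (Suc t)) = real (Suc t) powr (- gam)"
      using powr_add[of "real (Suc t)" "1 - gam" "-1"] by (simp add: powr_minus_divide)
    finally show ?thesis
      by (simp add: b_def)
  qed
  then have "(\<Sum>t. (\<integral>\<^sup>+ w. err_bound (Suc t) w \<partial>M) * ennreal (1 / real (Suc t))) \<le> (\<Sum>t. ennreal (K' * b t))"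
    by (intro suminf_le) auto
  also have "\<dots> = ennreal (\<Sum>t. K' * b t)"
  proof (rule suminf_ennreal2)
    show "0 \<le> K' * b t" for t
      using \<open>0 \<le> K'\<close> phibar[of "Suc t"] by (simp add: b_def max_def)
    show "summable (\<lambda>t. K' * b t)"
      unfolding b_def by (rule summable_mult[OF sum_cond])
  qed
  finally show ?thesis
    by (auto simp: top_unique)
qed

lemma abs_Hn_diff_le:
  assumes trunc_finite: "\<forall>t. trunc_bound t w \<noteq> \<top>" and err_finite: "\<forall>t. err_bound (Suc t) w \<noteq> \<top>"
    and th: "th \<in> Theta"
  shows "\<bar>Hn g a Y (\<lambda>t th w. eta_lamhat t th w) n th w - Hn g a Y (\<lambda>t th w. eta_lam t th w) n th w\<bar>
    \<le> (\<Sum>t=1..n. enn2real (err_bound t w)) / real n"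
proof -
  have term_le: "\<bar>dpd g a (Y (int t) w) (eta_lamhat (int t) th w) - dpd g a (Y (int t) w) (eta_lam (int t) th w)\<bar>
      \<le> enn2real (err_bound t w)" if "t \<in> {1..n}" for t
  proof -
    have "err_bound t w \<noteq> \<top>"
      using err_finite[rule_format, of "t - 1"] that by simp
    then have "ennreal \<bar>dpd g a (Y (int t) w) (eta_lamhat (int t) th w) - dpd g a (Y (int t) w) (eta_lam (int t) th w)\<bar>
        \<le> ennreal (enn2real (err_bound t w))"
      using abs_dpd_diff_le_err_bound[OF th trunc_finite[rule_format]] by (simp add: ennreal_enn2real_if)
    then show ?thesis
      by simp
  qed
  have "\<bar>Hn g a Y (\<lambda>t th w. eta_lamhat t th w) n th w - Hn g a Y (\<lambda>t th w. eta_lam t th w) n th w\<bar>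
      = \<bar>\<Sum>t=1..n. dpd g a (Y (int t) w) (eta_lamhat (int t) th w) - dpd g a (Y (int t) w) (eta_lam (int t) th w)\<bar>
        / real n"
    unfolding Hn_def by (simp add: sum_subtractf diff_divide_distrib[symmetric])
  also have "\<dots> \<le> (\<Sum>t=1..n. enn2real (err_bound t w)) / real n"
    using term_le by (intro divide_right_mono order_trans[OF sum_abs sum_mono]) auto
  finally show ?thesis .
qed

theorem AE_uniform_Hn_diff_tendsto_0:
  "AE w in M. (\<lambda>n. SUP th \<in> Theta. ennreal \<bar>Hn g a Y (\<lambda>t th w. eta_lamhat t th w) n th w
    - Hn g a Y (\<lambda>t th w. eta_lam t th w) n th w\<bar>) \<longlonglongrightarrow> 0"
  using AE_trunc_bound_finite
    AE_cesaro_mean_tendsto_0[OF borel_measurable_err_bound err_bound_weighted_sum_finite]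
proof eventually_elim
  case (elim w)
  define h where "h = (\<lambda>n. ennreal ((\<Sum>t=1..n. enn2real (err_bound t w)) / real n))"
  have "h \<longlonglongrightarrow> ennreal 0"
    unfolding h_def using elim(2) by (intro tendsto_ennrealI) auto
  then have lim: "h \<longlonglongrightarrow> 0"
    by simp
  have le: "(SUP th \<in> Theta. ennreal \<bar>Hn g a Y (\<lambda>t th w. eta_lamhat t th w) n th w
      - Hn g a Y (\<lambda>t th w. eta_lam t th w) n th w\<bar>) \<le> h n" for n
  proof (rule SUP_least)
    fix th assume "th \<in> Theta"
    with elim show "ennreal \<bar>Hn g a Y (\<lambda>t th w. eta_lamhat t th w) n th w
        - Hn g a Y (\<lambda>t th w. eta_lam t th w) n th w\<bar> \<le> h n"
      unfolding h_def by (intro ennreal_leI abs_Hn_diff_le) auto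
  qed
  show ?case
    by (rule tendsto_sandwich[OF _ _ tendsto_const lim]) (simp_all add: le always_eventually)
qed

end

theorem lemma6p1:
  fixes M :: "'w measure"
    and Y :: "int \<Rightarrow> 'w \<Rightarrow> nat"
    and X :: "int \<Rightarrow> 'w \<Rightarrow> real ^ 'e"
    and f :: "real ^ 'd \<Rightarrow> (nat \<Rightarrow> nat) \<Rightarrow> (nat \<Rightarrow> real ^ 'e) \<Rightarrow> real"
    and Theta :: "(real ^ 'd) set"
    and theta0 :: "real ^ 'd"
    and g :: "nat \<Rightarrow> real \<Rightarrow> real"
    and eta :: "real \<Rightarrow> real"
    and a eps C cbar c_eta gam :: real
    and alpha0 phibar psibar :: "nat \<Rightarrow> real"
  assumes prob: "prob_space M"
    and a_pos: "a > 0"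
    and Theta: "compact Theta"
    and theta0: "theta0 \<in> Theta"
    and Y_meas: "\<And>t. Y t \<in> M \<rightarrow>\<^sub>M count_space UNIV"
    and X_meas: "\<And>t. X t \<in> borel_measurable M"
    and f_meas: "\<And>th. th \<in> Theta \<Longrightarrow> (\<lambda>(y, x). f th y x) \<in> borel_measurable
                   (PiM UNIV (\<lambda>_. count_space UNIV) \<Otimes>\<^sub>M PiM UNIV (\<lambda>_. borel))"
    and f_nonneg: "\<And>th y x. th \<in> Theta \<Longrightarrow> f th y x \<ge> 0"
    \<comment> \<open>g(.|e) is a pmf on N_0\<close>
    and g_pmf: "\<And>y e. g y e \<ge> 0" "\<And>e. (\<lambda>y. g y e) sums 1"
    \<comment> \<open>conditional law of Y_t given F_{t-1} and conditional mean\<close>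
    and cond_law: "\<And>t y. AE w in M. real_cond_exp M (past_sigma M Y X (t - 1))
                      (\<lambda>w. indicator {w. Y t w = y} w) w = g y (eta (lam f Y X t theta0 w))"
    and cond_mean: "\<And>t. AE w in M. real_cond_exp M (past_sigma M Y X (t - 1))
                      (\<lambda>w. real (Y t w)) w = lam f Y X t theta0 w"
    and ident_distr: "\<And>t. distr M (count_space UNIV) (Y t) = distr M (count_space UNIV) (Y 0)"
    and support: "\<And>t w th th'. th \<in> Theta \<Longrightarrow> th' \<in> Theta \<Longrightarrow>
                   {y. g y (eta (lam f Y X t th w)) \<noteq> 0} = {y. g y (eta (lam f Y X t th' w)) \<noteq> 0}"
    and stat_erg: "stationary_ergodic M (count_space UNIV \<Otimes>\<^sub>M borel \<Otimes>\<^sub>M borel)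
                     (\<lambda>t w. (Y t w, lam f Y X t theta0 w, X t w))"
    \<comment> \<open>moment condition (M) with eps > 2\<close>
    and eps: "eps > 2"
    and moment: "C > 0" "\<And>t. (\<integral>\<^sup>+ w. ennreal (max (real (Y t w)) (max \<bar>lam f Y X t theta0 w\<bar> (supn (X t w)))
                      powr (1 + eps)) \<partial>M) < ennreal C"
    \<comment> \<open>A_0(Theta)\<close>
    and f_cont: "\<And>y x. continuous_on Theta (\<lambda>th. f th y x)"
    and f_zero: "\<exists>B. \<forall>th \<in> Theta. \<bar>f th (\<lambda>_. 0) (\<lambda>_. 0)\<bar> \<le> B"
    and alpha0_nonneg: "\<And>k. alpha0 k \<ge> 0"
    and alpha0_sum: "summable alpha0" "suminf alpha0 < 1"
    and f_lip: "\<And>y x y' x'. summable (\<lambda>k. alpha0 k * (\<bar>real (y k) - real (y' k)\<bar> + supn (x k - x' k))) \<Longrightarrow>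
                 \<forall>th \<in> Theta. \<bar>f th y x - f th y' x'\<bar>
                    \<le> (\<Sum>k. alpha0 k * (\<bar>real (y k) - real (y' k)\<bar> + supn (x k - x' k)))"
    \<comment> \<open>(A0)\<close>
    and A0_ident: "\<And>th th'. th \<in> Theta \<Longrightarrow> th' \<in> Theta \<Longrightarrow>
                    (\<exists>t. AE w in M. lam f Y X t th w = lam f Y X t th' w) \<Longrightarrow> th = th'"
    and A0_lower: "cbar > 0" "\<And>th y x. th \<in> Theta \<Longrightarrow> f th y x \<ge> cbar"
    \<comment> \<open>(A1)\<close>
    and A1: "theta0 \<in> interior Theta"
    \<comment> \<open>(A2)\<close>
    and A2: "\<exists>L. L < \<infinity> \<and> (\<forall>t::int. t \<ge> 1 \<longrightarrow>
               (\<integral>\<^sup>+ w. (SUP th \<in> Theta. ennreal \<bar>lam f Y X t th w\<bar>) ^ 4 \<partial>M) = L)"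
    \<comment> \<open>(A3)\<close>
    and A3_C2: "\<And>y. \<exists>g1 g2. (\<forall>e. (g y has_real_derivative g1 e) (at e)) \<and>
                      (\<forall>e. (g1 has_real_derivative g2 e) (at e)) \<and> continuous_on UNIV g2"
    and A3_inj: "\<And>e e'. (\<forall>y. g y e = g y e') \<Longrightarrow> e = e'"
    \<comment> \<open>(A4)\<close>
    and A4_def: "\<And>e. summable (\<lambda>y. \<bar>deriv (g y) e\<bar>)"
    and A4: "\<And>t::nat. t \<ge> 1 \<Longrightarrow> phibar t > 0 \<and> (\<forall>\<delta> \<in> {0..1::real}.
               (\<integral>\<^sup>+ w. (SUP th \<in> Theta. ennreal (phi_fun g
                   (\<delta> * eta (lam f Y X (int t) th w) + (1 - \<delta>) * eta (lamhat f Y X (int t) th w)))) ^ 2 \<partial>M)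
               \<le> ennreal ((phibar t)\<^sup>2))"
    \<comment> \<open>(A5)\<close>
    and A5: "\<And>t::nat. t \<ge> 1 \<Longrightarrow> psibar t > 0 \<and> (\<forall>\<delta> \<in> {0..1::real}.
               (\<integral>\<^sup>+ w. (SUP th \<in> Theta. ennreal (psi_fun g (Y (int t) w)
                   (\<delta> * eta (lam f Y X (int t) th w) + (1 - \<delta>) * eta (lamhat f Y X (int t) th w)))) ^ 2 \<partial>M)
               \<le> ennreal ((psibar t)\<^sup>2))"
    \<comment> \<open>(A6)\<close>
    and A6: "c_eta > 0" "\<And>u v. u \<ge> cbar \<Longrightarrow> v \<ge> cbar \<Longrightarrow> \<bar>eta u - eta v\<bar> \<le> c_eta * \<bar>u - v\<bar>"
      "inj_on eta {cbar..}"
    \<comment> \<open>decay conditions\<close>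
    and gam: "gam > 1"
    and alpha0_decay: "alpha0 \<in> O(\<lambda>k. real (Suc k) powr (- gam))"
    and sum_cond: "summable (\<lambda>k. real (Suc k) powr (- gam) * max (phibar (Suc k)) (psibar (Suc k)))"
  shows "AE w in M. (\<lambda>n. SUP th \<in> Theta.
            ennreal \<bar>Hn g a Y (\<lambda>t th w. eta (lamhat f Y X t th w)) n th w
                    - Hn g a Y (\<lambda>t th w. eta (lam f Y X t th w)) n th w\<bar>) \<longlonglongrightarrow> 0"
proof -
  obtain g' where g': "\<And>y e. (g y has_real_derivative g' y e) (at e)" "\<And>y. continuous_on UNIV (g' y)"
  proof -
    have "\<exists>h. (\<forall>e. (g y has_real_derivative h e) (at e)) \<and> continuous_on UNIV h" for y
      using A3_C2[of y] by (metis DERIV_isCont continuous_at_imp_continuous_on)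
    then show ?thesis
      using that by metis
  qed
  have "deriv (g y) = g' y" for y
    using g'(1) by (intro ext DERIV_imp_deriv)
  then interpret dpd_estimation M Y X f Theta theta0 g g' eta a eps C cbar c_eta gam alpha0 phibar psibar
    using prob a_pos theta0 Y_meas X_meas f_meas g_pmf g' A4_def eps moment f_cont alpha0_nonneg f_lip
      A0_lower(2) A6(1,2) gam alpha0_decay A4 A5 sum_cond
    by (simp add: dpd_estimation_def dpd_estimation_axioms_def)
  show ?thesis
    by (rule AE_uniform_Hn_diff_tendsto_0)
qed

end
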